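(* Let $E$ be a complex Banach lattice, $A$ the set of all positive atoms of $E$ of norm one, $E_A=A^{dd}$, $E_{A^d}=A^d$, and let $T\in Z(E)$ be such that its restriction $T_A$ to $E_A$ is compact. Then there exist $T_1,T_2\in Z(E)$ with $T_1$ compact such that $T=T_1+T_2$, the restriction of $T_1$ to $E_A$ equals $T_A$, and the restriction of $T_2$ to $E_{A^d}$ equals the restriction $T_{A^d}$ of $T$ to $E_{A^d}$. *)

theory Defs
  imports "HOL-Analysis.Analysis"
begin

class real_banach_lattice = banach + ordered_real_vector + lattice +
  assumes lattice_norm_mono:
    "sup x (- x) \<le> sup y (- y) \<Longrightarrow> norm x \<le> norm y"

definition labs :: "'a::real_banach_lattice \<Rightarrow> 'a" where
  "labs x = sup x (- x)"

section \<open>The complexification E = E_R + i E_R, represented by pairs (x, y) = x + i y\<close>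

definition cmul :: "complex \<Rightarrow> 'a::real_banach_lattice \<times> 'a \<Rightarrow> 'a \<times> 'a" where
  "cmul c z = (Re c *\<^sub>R fst z - Im c *\<^sub>R snd z, Im c *\<^sub>R fst z + Re c *\<^sub>R snd z)"

definition cabs :: "'a::real_banach_lattice \<times> 'a \<Rightarrow> 'a" where
  "cabs z = (THE u. (\<forall>\<theta>::real. cos \<theta> *\<^sub>R fst z + sin \<theta> *\<^sub>R snd z \<le> u) \<and>
                    (\<forall>v. (\<forall>\<theta>::real. cos \<theta> *\<^sub>R fst z + sin \<theta> *\<^sub>R snd z \<le> v) \<longrightarrow> u \<le> v))"

definition cnorm :: "'a::real_banach_lattice \<times> 'a \<Rightarrow> real" where
  "cnorm z = norm (cabs z)"

definition real_center :: "('a::real_banach_lattice \<Rightarrow> 'a) set" where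
  "real_center = {S. linear S \<and>
      (\<exists>c::real. \<forall>x. 0 \<le> x \<longrightarrow> - (c *\<^sub>R x) \<le> S x \<and> S x \<le> c *\<^sub>R x)}"

definition center :: "('a::real_banach_lattice \<times> 'a \<Rightarrow> 'a \<times> 'a) set" where
  "center = {T. \<exists>S1 \<in> real_center. \<exists>S2 \<in> real_center.
      \<forall>x y. T (x, y) = (S1 x - S2 y, S2 x + S1 y)}"

definition norm_one_pos_atoms :: "('a::real_banach_lattice \<times> 'a) set" where
  "norm_one_pos_atoms = {a. snd a = 0 \<and> 0 < fst a \<and>
      (\<forall>v. 0 \<le> v \<and> v \<le> fst a \<longrightarrow> (\<exists>r::real. v = r *\<^sub>R fst a)) \<and> cnorm a = 1}"

definition disj_compl :: "('a::real_banach_lattice \<times> 'a) set \<Rightarrow> ('a \<times> 'a) set" where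
  "disj_compl S = {z. \<forall>w\<in>S. inf (cabs z) (cabs w) = 0}"

text \<open>An operator T on E restricted to the subset F is compact: the image of the
  unit ball of F is relatively compact.  (The topology on pairs is the product
  topology, which agrees with the topology of cnorm, since the norms are equivalent.)\<close>
definition compact_on :: "('a::real_banach_lattice \<times> 'a \<Rightarrow> 'a \<times> 'a) \<Rightarrow> ('a \<times> 'a) set \<Rightarrow> bool" where
  "compact_on T F \<longleftrightarrow> compact (closure (T ` {z \<in> F. cnorm z \<le> 1}))"

end

(*
  Write T = S1 + i S2 with S1, S2 central operators of the real lattice. A central operator
  acts on every atom a as a scalar, S a = lambda(a) a. Since T maps the atoms into the image of
  the unit ball of the band A^dd, compactness of T there implies that for every n only finitely
  many atoms have |lambda(a)| >= 1/(n+1): their images are 1/(n+1)-separated in a compact set.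
  Hence the atomic part R x = sum_a lambda(a) c_a(x) a of S, where c_a(x) a is the band
  projection of x onto the span of a, is a norm limit of finite-rank central operators, so it
  is compact and central; it agrees with S on A^dd and vanishes on A^d. Put
  T1 = R1 + i R2 and T2 = T - T1.
  The only extra work in the complex setting is the existence of the modulus
  sup_t (cos t x + sin t y), obtained as the limit of finite suprema over dyadic angles.
*)

theory Submission
  imports Defs "HOL-Library.Lattice_Algebras"
begin

context real_banach_lattice
begin
subclass lattice_ab_group_add ..
end

section \<open>Vector lattices\<close>

lemma pos_part_minus_neg_part: "(x::'a::lattice_ab_group_add) = sup x 0 - sup (- x) 0"
proof -
  have "inf x 0 = - sup (- x) 0" using inf_eq_neg_sup[of x 0] by simp
  then show ?thesis using add_eq_inf_sup[of x 0] by (metis add_0_right diff_conv_add_uminus)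
qed

lemma inf_eq_minus_pos_part: "inf (u::'a::lattice_ab_group_add) w = u - sup (u - w) 0"
proof -
  have "u - sup (u - w) 0 = u + inf (- (u - w)) (- 0)" by (rule diff_sup_eq_inf)
  also have "\<dots> = inf (u + - (u - w)) (u + - 0)" by (rule add_inf_distrib_left)
  also have "\<dots> = inf w u" by simp
  finally show ?thesis by (simp add: inf.commute)
qed

lemma inf_eq_0_if_le:
  fixes u v w :: "'a::{lattice, zero}"
  assumes "0 \<le> u" "u \<le> v" "0 \<le> w" "inf v w = 0"
  shows "inf u w = 0"
  using assms inf_mono[OF \<open>u \<le> v\<close> order_refl, of w] by (metis le_inf_iff order_antisym)

lemma inf_add_le_add_inf:
  fixes u v w :: "'a::lattice_ab_group_add"
  assumes "0 \<le> u" "0 \<le> v" "0 \<le> w"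
  shows "inf (u + v) w \<le> inf u w + inf v w"
proof -
  have "w \<le> u + w" "w \<le> w + v" "w \<le> w + w"
    using assms by (simp_all add: add_increasing add_increasing2)
  then have "inf (u + v) w \<le> inf (inf (u + v) (u + w)) (inf (w + v) (w + w))"
    by (meson inf_le1 inf_le2 le_inf_iff order_trans)
  then show ?thesis by (simp add: add_inf_distrib_left add_inf_distrib_right)
qed

lemma scaleR_sup_nonneg:
  assumes "0 \<le> c"
  shows "c *\<^sub>R sup (a::'a::{ordered_real_vector, lattice}) b = sup (c *\<^sub>R a) (c *\<^sub>R b)"
proof (cases "c = 0")
  case False
  with assms have c: "0 < c" by simp
  show ?thesis
  proof (rule order_antisym)
    show "sup (c *\<^sub>R a) (c *\<^sub>R b) \<le> c *\<^sub>R sup a b"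
      using assms by (simp add: scaleR_left_mono)
    have "a = inverse c *\<^sub>R (c *\<^sub>R a)" "b = inverse c *\<^sub>R (c *\<^sub>R b)" using c by auto
    moreover have "inverse c *\<^sub>R (c *\<^sub>R a) \<le> inverse c *\<^sub>R sup (c *\<^sub>R a) (c *\<^sub>R b)"
      and "inverse c *\<^sub>R (c *\<^sub>R b) \<le> inverse c *\<^sub>R sup (c *\<^sub>R a) (c *\<^sub>R b)"
      using c by (intro scaleR_left_mono; simp)+
    ultimately have "sup a b \<le> inverse c *\<^sub>R sup (c *\<^sub>R a) (c *\<^sub>R b)" by (metis sup_least)
    then have "c *\<^sub>R sup a b \<le> c *\<^sub>R (inverse c *\<^sub>R sup (c *\<^sub>R a) (c *\<^sub>R b))"
      using c by (intro scaleR_left_mono) auto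
    then show "c *\<^sub>R sup a b \<le> sup (c *\<^sub>R a) (c *\<^sub>R b)" using c by simp
  qed
qed simp

lemma scaleR_inf_nonneg:
  assumes "0 \<le> c"
  shows "c *\<^sub>R inf (a::'a::{ordered_real_vector, lattice_ab_group_add}) b = inf (c *\<^sub>R a) (c *\<^sub>R b)"
proof -
  have "c *\<^sub>R inf a b = - (c *\<^sub>R sup (- a) (- b))"
    by (subst inf_eq_neg_sup) (rule scaleR_minus_right)
  also have "\<dots> = - sup (- (c *\<^sub>R a)) (- (c *\<^sub>R b))"
    by (subst scaleR_sup_nonneg[OF assms]) simp
  also have "\<dots> = inf (c *\<^sub>R a) (c *\<^sub>R b)" by (rule inf_eq_neg_sup[symmetric])
  finally show ?thesis .
qed

lemma nonpos_if_scaleR_nonpos: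
  fixes a :: "'a::ordered_real_vector"
  assumes "0 < a" "t *\<^sub>R a \<le> 0"
  shows "t \<le> 0"
proof (rule ccontr)
  assume "\<not> t \<le> 0"
  then have "(1 / t) *\<^sub>R (t *\<^sub>R a) \<le> (1 / t) *\<^sub>R 0"
    using assms(2) by (intro scaleR_left_mono) auto
  then have "a \<le> 0" using \<open>\<not> t \<le> 0\<close> by simp
  with assms(1) show False by simp
qed

lemma scaleR_le_scaleR_iff_pos:
  fixes a :: "'a::ordered_real_vector"
  assumes "0 < a"
  shows "s *\<^sub>R a \<le> t *\<^sub>R a \<longleftrightarrow> s \<le> t"
proof
  assume "s *\<^sub>R a \<le> t *\<^sub>R a"
  then have "(s - t) *\<^sub>R a \<le> 0" by (simp add: scaleR_diff_left)
  then show "s \<le> t" using nonpos_if_scaleR_nonpos[OF assms] by fastforce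
next
  assume "s \<le> t"
  then show "s *\<^sub>R a \<le> t *\<^sub>R a" using assms by (intro scaleR_right_mono) auto
qed

section \<open>Lattice arithmetic and the order topology of a real Banach lattice\<close>

lemma labs_eq_pos_plus_neg: "labs (x::'a::real_banach_lattice) = sup x 0 + sup (- x) 0"
proof -
  have "0 \<le> sup x (- x)"
    using add_mono[of x "sup x (- x)" "- x" "sup x (- x)"] by simp
  have "sup x 0 + sup (- x) 0 = sup (x + sup (- x) 0) (sup (- x) 0)"
    by (simp add: add_sup_distrib_right)
  also have "x + sup (- x) 0 = sup 0 x" by (simp add: add_sup_distrib_left)
  also have "sup (sup 0 x) (sup (- x) 0) = sup 0 (sup x (- x))"
    by (simp add: sup_assoc sup_commute sup_left_commute)
  also have "\<dots> = sup x (- x)" using \<open>0 \<le> sup x (- x)\<close> by (rule sup_absorb2)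
  finally show ?thesis by (simp add: labs_def)
qed

lemma labs_nonneg: "0 \<le> labs (x::'a::real_banach_lattice)"
  unfolding labs_eq_pos_plus_neg by (simp add: add_nonneg_nonneg)

lemma le_labs: "(x::'a::real_banach_lattice) \<le> labs x"
  and neg_le_labs: "- (x::'a::real_banach_lattice) \<le> labs x"
  unfolding labs_def by auto

lemma labs_le_iff: "labs (x::'a::real_banach_lattice) \<le> v \<longleftrightarrow> x \<le> v \<and> - x \<le> v"
  unfolding labs_def by auto

lemma labs_minus: "labs (- (x::'a::real_banach_lattice)) = labs x"
  unfolding labs_def by (simp add: sup.commute)

lemma labs_of_nonneg: "0 \<le> (x::'a::real_banach_lattice) \<Longrightarrow> labs x = x"
  unfolding labs_def by (metis neg_le_0_iff_le order_trans sup.absorb1)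

lemma labs_labs: "labs (labs (x::'a::real_banach_lattice)) = labs x"
  by (rule labs_of_nonneg[OF labs_nonneg])

lemma labs_eq_0_iff: "labs (x::'a::real_banach_lattice) = 0 \<longleftrightarrow> x = 0"
proof
  assume "labs x = 0"
  then have "x \<le> 0" and "- x \<le> 0" using le_labs[of x] neg_le_labs[of x] by auto
  then show "x = 0" by (simp only: neg_le_0_iff_le order_antisym)
qed (simp add: labs_def)

lemma labs_0 [simp]: "labs (0::'a::real_banach_lattice) = 0"
  by (simp add: labs_eq_0_iff)

lemma labs_add_le: "labs ((x::'a::real_banach_lattice) + y) \<le> labs x + labs y"
  unfolding labs_le_iff using le_labs neg_le_labs add_mono by (metis minus_add_distrib add.commute)

lemma labs_diff_le: "labs ((x::'a::real_banach_lattice) - y) \<le> labs x + labs y"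
  using labs_add_le[of x "- y"] labs_minus[of y] by simp

lemma labs_minus_commute: "labs ((x::'a::real_banach_lattice) - y) = labs (y - x)"
  using labs_minus[of "x - y"] by simp

lemma labs_sum_le:
  fixes f :: "'b \<Rightarrow> 'a::real_banach_lattice"
  shows "finite F \<Longrightarrow> labs (sum f F) \<le> (\<Sum>i\<in>F. labs (f i))"
  by (induction F rule: finite_induct) (auto intro: order_trans[OF labs_add_le])

lemma labs_scaleR: "labs (c *\<^sub>R (x::'a::real_banach_lattice)) = \<bar>c\<bar> *\<^sub>R labs x"
proof (cases "0 \<le> c")
  case True
  then show ?thesis unfolding labs_def using scaleR_sup_nonneg[OF True, of x "- x"] by simp
next
  case False
  then have "labs (c *\<^sub>R x) = labs ((- c) *\<^sub>R x)" using labs_minus[of "c *\<^sub>R x"] by simp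
  also have "\<dots> = (- c) *\<^sub>R labs x"
    unfolding labs_def using False scaleR_sup_nonneg[of "- c" x "- x"] by simp
  finally show ?thesis using False by simp
qed

lemma scaleR_le_labs: "c *\<^sub>R (x::'a::real_banach_lattice) \<le> \<bar>c\<bar> *\<^sub>R labs x"
  using le_labs[of "c *\<^sub>R x"] by (simp add: labs_scaleR)

lemma norm_labs_mono: "labs (x::'a::real_banach_lattice) \<le> labs y \<Longrightarrow> norm x \<le> norm y"
  unfolding labs_def by (rule lattice_norm_mono)

lemma norm_labs: "norm (labs (x::'a::real_banach_lattice)) = norm x"
  by (rule order_antisym; rule norm_labs_mono; simp add: labs_labs)

lemma norm_mono_nonneg: "0 \<le> (u::'a::real_banach_lattice) \<Longrightarrow> u \<le> v \<Longrightarrow> norm u \<le> norm v"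
  by (rule norm_labs_mono) (simp add: labs_of_nonneg)

lemma norm_le_if_labs_le: "labs (x::'a::real_banach_lattice) \<le> v \<Longrightarrow> norm x \<le> norm v"
  by (metis labs_nonneg norm_labs norm_mono_nonneg)

lemma norm_pos_part_le: "norm (sup (x::'a::real_banach_lattice) 0) \<le> norm x"
  using norm_mono_nonneg[of "sup x 0" "labs x"] le_labs[of x] labs_nonneg[of x]
  by (simp add: norm_labs)

lemma labs_pos_part_diff_le: "labs (sup (u::'a::real_banach_lattice) 0 - sup v 0) \<le> labs (u - v)"
proof -
  have key: "sup a 0 - sup b 0 \<le> labs (a - b)" for a b :: 'a
  proof -
    have "a \<le> b + labs (a - b)" using le_labs[of "a - b"] by (simp add: algebra_simps)
    also have "\<dots> \<le> sup b 0 + labs (a - b)" by simp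
    finally have "a \<le> sup b 0 + labs (a - b)" .
    moreover have "0 \<le> sup b 0 + labs (a - b)" by (simp add: labs_nonneg add_nonneg_nonneg)
    ultimately have "sup a 0 \<le> sup b 0 + labs (a - b)" by (rule sup_least)
    then show ?thesis by (metis diff_le_eq add.commute)
  qed
  show ?thesis
    unfolding labs_le_iff using key[of u v] key[of v u] labs_minus_commute[of v u]
    by (metis minus_diff_eq)
qed

lemma norm_pos_part_diff_le: "norm (sup (u::'a::real_banach_lattice) 0 - sup v 0) \<le> norm (u - v)"
  using norm_le_if_labs_le[OF labs_pos_part_diff_le] norm_labs by metis

lemma tendsto_pos_part:
  fixes f :: "'b \<Rightarrow> 'a::real_banach_lattice"
  assumes "(f \<longlongrightarrow> l) F"
  shows "((\<lambda>n. sup (f n) 0) \<longlongrightarrow> sup l 0) F"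
proof -
  have "((\<lambda>n. norm (f n - l)) \<longlongrightarrow> 0) F"
    using tendsto_norm_zero[OF LIM_zero[OF assms]] .
  then have "((\<lambda>n. sup (f n) 0 - sup l 0) \<longlongrightarrow> 0) F"
    by (rule Lim_null_comparison[OF always_eventually, rotated]) (intro allI norm_pos_part_diff_le)
  then show ?thesis by (rule LIM_zero_cancel)
qed

lemma tendsto_inf_lattice:
  fixes f g :: "'b \<Rightarrow> 'a::real_banach_lattice"
  assumes "(f \<longlongrightarrow> l) F" "(g \<longlongrightarrow> m) F"
  shows "((\<lambda>n. inf (f n) (g n)) \<longlongrightarrow> inf l m) F"
  unfolding inf_eq_minus_pos_part by (intro tendsto_diff assms tendsto_pos_part)

lemma tendsto_labs:
  fixes f :: "'b \<Rightarrow> 'a::real_banach_lattice"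
  assumes "(f \<longlongrightarrow> l) F"
  shows "((\<lambda>n. labs (f n)) \<longlongrightarrow> labs l) F"
  unfolding labs_eq_pos_plus_neg by (intro tendsto_add tendsto_pos_part tendsto_minus assms)

lemma LIMSEQ_le_lattice:
  fixes f g :: "nat \<Rightarrow> 'a::real_banach_lattice"
  assumes "f \<longlonglongrightarrow> l" "g \<longlonglongrightarrow> m" "eventually (\<lambda>n. f n \<le> g n) sequentially"
  shows "l \<le> m"
proof -
  have "eventually (\<lambda>n. sup (f n - g n) 0 = 0) sequentially"
    using assms(3) by (rule eventually_mono) (rule sup_absorb2, simp)
  then have "(\<lambda>n. sup (f n - g n) 0) \<longlonglongrightarrow> 0" by (rule tendsto_eventually)
  then have "sup (l - m) 0 = 0"
    by (rule LIMSEQ_unique[OF tendsto_pos_part[OF tendsto_diff[OF assms(1,2)]]])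
  then have "l - m \<le> 0" using sup_ge1[of "l - m" 0] by simp
  then show ?thesis by simp
qed

lemma nonpos_if_le_inverse_multiples:
  fixes v w :: "'a::real_banach_lattice"
  assumes "\<And>n::nat. v \<le> inverse (real (Suc n)) *\<^sub>R w"
  shows "v \<le> 0"
proof -
  have "(\<lambda>n. inverse (real (Suc n)) *\<^sub>R w) \<longlonglongrightarrow> 0 *\<^sub>R w"
    by (intro tendsto_scaleR LIMSEQ_inverse_real_of_nat tendsto_const)
  then show ?thesis using LIMSEQ_le_lattice[of "\<lambda>_. v" v] assms by simp
qed

section \<open>Disjointness\<close>

definition ldisj :: "'a::real_banach_lattice \<Rightarrow> 'a \<Rightarrow> bool" where
  "ldisj u v \<longleftrightarrow> inf (labs u) (labs v) = 0"

lemma ldisj_sym: "ldisj u v \<Longrightarrow> ldisj v u"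
  unfolding ldisj_def by (simp add: inf.commute)

lemma ldisj_iff_le_0: "ldisj u v \<longleftrightarrow> inf (labs u) (labs v) \<le> 0"
  unfolding ldisj_def using labs_nonneg[of u] labs_nonneg[of v]
  by (metis le_inf_iff order_antisym order_refl)

lemma ldisj_add:
  fixes u v w :: "'a::real_banach_lattice"
  assumes "ldisj u w" "ldisj v w"
  shows "ldisj (u + v) w"
proof -
  have "inf (labs (u + v)) (labs w) \<le> inf (labs u + labs v) (labs w)"
    by (rule inf_mono[OF labs_add_le order_refl])
  also have "\<dots> \<le> inf (labs u) (labs w) + inf (labs v) (labs w)"
    by (rule inf_add_le_add_inf) (auto simp: labs_nonneg)
  also have "\<dots> = 0" using assms unfolding ldisj_def by simp
  finally show ?thesis unfolding ldisj_iff_le_0 .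
qed

lemma ldisj_dominated:
  fixes u v w :: "'a::real_banach_lattice"
  assumes le: "labs v \<le> c *\<^sub>R labs u" and "ldisj u w"
  shows "ldisj v w"
proof -
  define c' where "c' = max c 1"
  have c': "1 \<le> c'" "c \<le> c'" unfolding c'_def by auto
  have "labs v \<le> c' *\<^sub>R labs u"
    using le scaleR_right_mono[OF c'(2) labs_nonneg] by (rule order_trans)
  moreover have "labs w \<le> c' *\<^sub>R labs w"
    using scaleR_right_mono[OF c'(1) labs_nonneg, of w] by simp
  ultimately have "inf (labs v) (labs w) \<le> inf (c' *\<^sub>R labs u) (c' *\<^sub>R labs w)"
    by (rule inf_mono)
  also have "\<dots> = c' *\<^sub>R inf (labs u) (labs w)"
    using c'(1) by (subst scaleR_inf_nonneg) auto
  also have "\<dots> = 0" using \<open>ldisj u w\<close> unfolding ldisj_def by simp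
  finally show ?thesis unfolding ldisj_iff_le_0 .
qed

lemma ldisj_scaleR: "ldisj u w \<Longrightarrow> ldisj (c *\<^sub>R u) w"
  by (rule ldisj_dominated[of _ "\<bar>c\<bar>"]) (simp_all add: labs_scaleR)

lemma ldisj_diff: "ldisj u w \<Longrightarrow> ldisj v w \<Longrightarrow> ldisj (u - v) w"
  using ldisj_add[of u w "- v"] ldisj_scaleR[of v w "- 1"] by simp

lemma ldisj_0: "ldisj (0::'a::real_banach_lattice) w"
  unfolding ldisj_def by (simp add: labs_nonneg inf_absorb1)

lemma ldisj_sum: "finite F \<Longrightarrow> (\<And>i. i \<in> F \<Longrightarrow> ldisj (f i) w) \<Longrightarrow> ldisj (sum f F) w"
  by (induction F rule: finite_induct) (auto simp: ldisj_0 intro: ldisj_add)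

lemma ldisj_self: "ldisj u u \<Longrightarrow> u = 0"
  unfolding ldisj_def by (simp add: labs_eq_0_iff)

lemma ldisj_LIMSEQ:
  fixes f :: "nat \<Rightarrow> 'a::real_banach_lattice"
  assumes "f \<longlonglongrightarrow> l" "eventually (\<lambda>n. ldisj (f n) w) sequentially"
  shows "ldisj l w"
proof -
  have "(\<lambda>n. inf (labs (f n)) (labs w)) \<longlonglongrightarrow> inf (labs l) (labs w)"
    by (intro tendsto_inf_lattice tendsto_labs assms(1) tendsto_const)
  moreover have "eventually (\<lambda>n. inf (labs (f n)) (labs w) \<le> 0) sequentially"
    using assms(2) by (rule eventually_mono) (simp add: ldisj_def)
  ultimately show ?thesis
    unfolding ldisj_iff_le_0 by (rule LIMSEQ_le_lattice[OF _ tendsto_const])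
qed

section \<open>Atoms and their coefficient functionals\<close>

definition is_atom :: "'a::real_banach_lattice \<Rightarrow> bool" where
  "is_atom a \<longleftrightarrow> 0 < a \<and> (\<forall>v. 0 \<le> v \<and> v \<le> a \<longrightarrow> (\<exists>r::real. v = r *\<^sub>R a)) \<and> norm a = 1"

lemma atom_pos: "is_atom a \<Longrightarrow> 0 < a"
  and atom_nonneg: "is_atom a \<Longrightarrow> 0 \<le> a"
  and atom_norm: "is_atom a \<Longrightarrow> norm a = 1"
  unfolding is_atom_def by auto

lemma labs_atom: "is_atom a \<Longrightarrow> labs a = a"
  by (rule labs_of_nonneg[OF atom_nonneg])

lemma atom_below:
  assumes "is_atom a" "0 \<le> v" "v \<le> a"
  shows "\<exists>r\<ge>0. v = r *\<^sub>R a"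
proof -
  obtain r where r: "v = r *\<^sub>R a" using assms unfolding is_atom_def by blast
  then have "0 *\<^sub>R a \<le> r *\<^sub>R a" using assms(2) by simp
  then have "0 \<le> r" using scaleR_le_scaleR_iff_pos[OF atom_pos[OF assms(1)]] by blast
  with r show ?thesis by blast
qed

lemma ldisj_atoms:
  fixes a b :: "'a::real_banach_lattice"
  assumes a: "is_atom a" and b: "is_atom b" and "a \<noteq> b"
  shows "ldisj a b"
proof -
  have m: "0 \<le> inf a b" using atom_nonneg[OF a] atom_nonneg[OF b] by simp
  obtain r where r: "0 \<le> r" "inf a b = r *\<^sub>R a" using atom_below[OF a m inf_le1] by blast
  obtain s where s: "0 \<le> s" "inf a b = s *\<^sub>R b" using atom_below[OF b m inf_le2] by blast
  have "inf a b = 0"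
  proof (rule ccontr)
    assume nz: "inf a b \<noteq> 0"
    then have "0 < r" using r by auto
    have ab: "a = (s / r) *\<^sub>R b" using r(2) s(2) \<open>0 < r\<close>
      by (metis divide_inverse_commute inverse_eq_divide scaleR_scaleR nonzero_eq_divide_eq
          order_less_irrefl scaleR_one)
    then have "norm a = (s / r) * norm b" using \<open>0 < r\<close> s(1) by simp
    then have "s / r = 1" using atom_norm[OF a] atom_norm[OF b] by simp
    with ab \<open>a \<noteq> b\<close> show False by simp
  qed
  then show ?thesis unfolding ldisj_def by (simp add: labs_atom a b)
qed

lemma ldisj_scaleR_self:
  fixes a :: "'a::real_banach_lattice"
  assumes a: "0 < a" and "ldisj (t *\<^sub>R a) a"
  shows "t = 0"
proof -
  have "inf (\<bar>t\<bar> *\<^sub>R a) a = 0"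
    using assms unfolding ldisj_def by (simp add: labs_scaleR labs_of_nonneg)
  moreover have "min \<bar>t\<bar> 1 *\<^sub>R a \<le> \<bar>t\<bar> *\<^sub>R a" "min \<bar>t\<bar> 1 *\<^sub>R a \<le> 1 *\<^sub>R a"
    using a by (intro scaleR_right_mono; simp)+
  ultimately have "min \<bar>t\<bar> 1 *\<^sub>R a \<le> 0" by (metis le_inf_iff scaleR_one)
  then have "min \<bar>t\<bar> 1 \<le> 0" by (rule nonpos_if_scaleR_nonpos[OF a])
  then show "t = 0" by (simp add: min_def split: if_splits)
qed

lemma largest_atom_multiple_below:
  fixes a u :: "'a::real_banach_lattice"
  assumes a: "is_atom a" and u: "0 \<le> u"
  obtains r where "0 \<le> r" "r *\<^sub>R a \<le> u" "\<And>s. 0 \<le> s \<Longrightarrow> s *\<^sub>R a \<le> u \<Longrightarrow> s \<le> r"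
proof -
  define S where "S = {s. 0 \<le> s \<and> s *\<^sub>R a \<le> u}"
  have bound: "s \<le> norm u" if "s \<in> S" for s
  proof -
    have s: "0 \<le> s" "s *\<^sub>R a \<le> u" using that unfolding S_def by auto
    have "0 \<le> s *\<^sub>R a" using s(1) atom_nonneg[OF a] by (rule scaleR_nonneg_nonneg)
    then have "norm (s *\<^sub>R a) \<le> norm u" using s(2) by (rule norm_mono_nonneg)
    then show ?thesis using s(1) atom_norm[OF a] by simp
  qed
  have ne: "S \<noteq> {}" and z: "0 \<in> S" using u unfolding S_def by auto
  have bdd: "bdd_above S" by (rule bdd_aboveI[of _ "norm u"]) (rule bound)
  define r where "r = Sup S"
  have upper: "s \<le> r" if "s \<in> S" for s unfolding r_def using cSup_upper[OF that bdd] .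
  have "r *\<^sub>R a - u \<le> inverse (real (Suc n)) *\<^sub>R a" for n
  proof -
    let ?e = "inverse (real (Suc n))"
    have "r - ?e < r" by simp
    then obtain s where s: "s \<in> S" "r - ?e < s"
      unfolding r_def using less_cSup_iff[OF ne bdd] by blast
    have "r *\<^sub>R a \<le> (s + ?e) *\<^sub>R a"
      using s(2) atom_pos[OF a] by (intro scaleR_right_mono) auto
    also have "\<dots> = s *\<^sub>R a + ?e *\<^sub>R a" by (rule scaleR_add_left)
    also have "\<dots> \<le> u + ?e *\<^sub>R a" using s(1) unfolding S_def by simp
    finally show ?thesis by (metis diff_le_eq add.commute)
  qed
  then have "r *\<^sub>R a - u \<le> 0" by (rule nonpos_if_le_inverse_multiples)
  then have "r *\<^sub>R a \<le> u" by simp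
  show ?thesis
  proof (rule that)
    show "0 \<le> r" using upper[OF z] .
    show "r *\<^sub>R a \<le> u" by fact
    show "s \<le> r" if "0 \<le> s" "s *\<^sub>R a \<le> u" for s using that by (intro upper) (simp add: S_def)
  qed
qed

text \<open>\<open>atom_coeff a x *\<^sub>R a\<close> is the band projection of \<open>x\<close> onto the span of the atom \<open>a\<close>.\<close>

definition atom_coeff :: "'a::real_banach_lattice \<Rightarrow> 'a \<Rightarrow> real" where
  "atom_coeff a x = (THE t. ldisj (x - t *\<^sub>R a) a)"

lemma atom_coeff_exists_nonneg:
  fixes a u :: "'a::real_banach_lattice"
  assumes a: "is_atom a" and u: "0 \<le> u"
  shows "\<exists>r\<ge>0. r *\<^sub>R a \<le> u \<and> ldisj (u - r *\<^sub>R a) a"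
proof -
  obtain r where r: "0 \<le> r" "r *\<^sub>R a \<le> u" and largest: "\<And>s. 0 \<le> s \<Longrightarrow> s *\<^sub>R a \<le> u \<Longrightarrow> s \<le> r"
    using largest_atom_multiple_below[OF a u] by blast
  define v where "v = u - r *\<^sub>R a"
  have v: "0 \<le> v" using r(2) unfolding v_def by simp
  then obtain t where t: "0 \<le> t" "inf v a = t *\<^sub>R a"
    using atom_below[OF a _ inf_le2] atom_nonneg[OF a] by (metis le_inf_iff)
  \<comment> \<open>the multiple of \<open>a\<close> below the remainder \<open>v\<close> can be added to \<open>r\<close>, so it vanishes\<close>
  have "t *\<^sub>R a \<le> v" using t(2) by (metis inf_le1)
  then have "(r + t) *\<^sub>R a \<le> u" unfolding v_def by (simp add: scaleR_add_left algebra_simps)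
  then have "t = 0" using largest[of "r + t"] r(1) t(1) by simp
  then have "ldisj v a" using t(2) unfolding ldisj_def by (simp add: labs_of_nonneg[OF v] labs_atom[OF a])
  then show ?thesis using r unfolding v_def by blast
qed

lemma atom_coeff_exists:
  assumes "is_atom a"
  shows "\<exists>t. ldisj (x - t *\<^sub>R a) a"
proof -
  obtain p q where "ldisj (sup x 0 - p *\<^sub>R a) a" "ldisj (sup (- x) 0 - q *\<^sub>R a) a"
    using atom_coeff_exists_nonneg[OF assms, of "sup x 0"] atom_coeff_exists_nonneg[OF assms, of "sup (- x) 0"]
    by auto
  then have "ldisj ((sup x 0 - p *\<^sub>R a) - (sup (- x) 0 - q *\<^sub>R a)) a" by (rule ldisj_diff)
  moreover have "(sup x 0 - p *\<^sub>R a) - (sup (- x) 0 - q *\<^sub>R a) = x - (p - q) *\<^sub>R a"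
    using pos_part_minus_neg_part[of x] by (simp add: scaleR_diff_left algebra_simps)
  ultimately show ?thesis by metis
qed

lemma atom_coeff_unique:
  fixes a :: "'a::real_banach_lattice"
  assumes a: "0 < a" and "ldisj (x - s *\<^sub>R a) a" "ldisj (x - t *\<^sub>R a) a"
  shows "s = t"
proof -
  have "ldisj ((x - s *\<^sub>R a) - (x - t *\<^sub>R a)) a" by (rule ldisj_diff[OF assms(2,3)])
  moreover have "(x - s *\<^sub>R a) - (x - t *\<^sub>R a) = (t - s) *\<^sub>R a" by (simp add: scaleR_diff_left)
  ultimately have "t - s = 0" using ldisj_scaleR_self[OF a] by metis
  then show ?thesis by simp
qed

lemma atom_coeff_eqI:
  assumes "is_atom a" "ldisj (x - t *\<^sub>R a) a"
  shows "atom_coeff a x = t"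
  unfolding atom_coeff_def
  using atom_coeff_unique[OF atom_pos[OF assms(1)]] assms(2) by (intro the_equality) auto

lemma ldisj_diff_atom_coeff:
  assumes "is_atom a"
  shows "ldisj (x - atom_coeff a x *\<^sub>R a) a"
proof -
  obtain t where "ldisj (x - t *\<^sub>R a) a" using atom_coeff_exists[OF assms] by blast
  then show ?thesis using atom_coeff_eqI[OF assms] by metis
qed

lemma atom_coeff_add:
  assumes a: "is_atom a"
  shows "atom_coeff a (x + y) = atom_coeff a x + atom_coeff a y"
proof (rule atom_coeff_eqI[OF a])
  have "ldisj ((x - atom_coeff a x *\<^sub>R a) + (y - atom_coeff a y *\<^sub>R a)) a"
    by (rule ldisj_add[OF ldisj_diff_atom_coeff[OF a] ldisj_diff_atom_coeff[OF a]])
  then show "ldisj (x + y - (atom_coeff a x + atom_coeff a y) *\<^sub>R a) a"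
    by (simp add: scaleR_add_left algebra_simps)
qed

lemma atom_coeff_scaleR:
  assumes a: "is_atom a"
  shows "atom_coeff a (c *\<^sub>R x) = c * atom_coeff a x"
proof (rule atom_coeff_eqI[OF a])
  have "ldisj (c *\<^sub>R (x - atom_coeff a x *\<^sub>R a)) a"
    by (rule ldisj_scaleR[OF ldisj_diff_atom_coeff[OF a]])
  then show "ldisj (c *\<^sub>R x - (c * atom_coeff a x) *\<^sub>R a) a"
    by (simp add: scaleR_diff_right)
qed

lemma atom_coeff_diff: "is_atom a \<Longrightarrow> atom_coeff a (x - y) = atom_coeff a x - atom_coeff a y"
  using atom_coeff_add[of a x "- y"] atom_coeff_scaleR[of a "- 1" y] by simp

lemma atom_coeff_0: "is_atom a \<Longrightarrow> atom_coeff a 0 = 0"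
  using atom_coeff_scaleR[of a 0 0] by simp

lemma atom_coeff_sum:
  assumes "is_atom a"
  shows "finite F \<Longrightarrow> atom_coeff a (sum f F) = (\<Sum>i\<in>F. atom_coeff a (f i))"
  by (induction F rule: finite_induct) (auto simp: atom_coeff_0[OF assms] atom_coeff_add[OF assms])

lemma atom_coeff_self: "is_atom a \<Longrightarrow> atom_coeff a a = 1"
  by (rule atom_coeff_eqI) (simp_all add: ldisj_0)

lemma atom_coeff_other_atom: "is_atom a \<Longrightarrow> is_atom b \<Longrightarrow> a \<noteq> b \<Longrightarrow> atom_coeff a b = 0"
  by (rule atom_coeff_eqI) (simp_all add: ldisj_atoms)

lemma atom_coeff_ldisj: "is_atom a \<Longrightarrow> ldisj x a \<Longrightarrow> atom_coeff a x = 0"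
  by (rule atom_coeff_eqI) simp_all

lemma atom_coeff_nonneg:
  assumes a: "is_atom a" and u: "0 \<le> u"
  shows "0 \<le> atom_coeff a u" "atom_coeff a u *\<^sub>R a \<le> u"
  using atom_coeff_exists_nonneg[OF a u] atom_coeff_eqI[OF a] by auto

lemma atom_coeff_le_norm:
  assumes a: "is_atom a" and u: "0 \<le> u"
  shows "atom_coeff a u \<le> norm u"
proof -
  have "0 \<le> atom_coeff a u *\<^sub>R a"
    using atom_coeff_nonneg(1)[OF a u] atom_nonneg[OF a] by (rule scaleR_nonneg_nonneg)
  then have "norm (atom_coeff a u *\<^sub>R a) \<le> norm u"
    using atom_coeff_nonneg(2)[OF a u] by (rule norm_mono_nonneg)
  then show ?thesis using atom_coeff_nonneg(1)[OF a u] atom_norm[OF a] by simp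
qed

lemma atom_coeff_pos_neg:
  assumes "is_atom a"
  shows "atom_coeff a x = atom_coeff a (sup x 0) - atom_coeff a (sup (- x) 0)"
  using atom_coeff_diff[OF assms, of "sup x 0" "sup (- x) 0"] pos_part_minus_neg_part[of x] by simp

lemma abs_atom_coeff_le_parts:
  assumes a: "is_atom a"
  shows "\<bar>atom_coeff a x\<bar> \<le> atom_coeff a (sup x 0) + atom_coeff a (sup (- x) 0)"
  using atom_coeff_pos_neg[OF a, of x] atom_coeff_nonneg(1)[OF a sup.cobounded2, of x]
    atom_coeff_nonneg(1)[OF a sup.cobounded2, of "- x"]
  by linarith

lemma abs_atom_coeff_le_norm:
  assumes a: "is_atom a"
  shows "\<bar>atom_coeff a x\<bar> \<le> norm x"
proof -
  have "atom_coeff a (sup x 0) \<le> norm x"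
    using atom_coeff_le_norm[OF a, of "sup x 0"] norm_pos_part_le[of x] by simp
  moreover have "atom_coeff a (sup (- x) 0) \<le> norm x"
    using atom_coeff_le_norm[OF a, of "sup (- x) 0"] norm_pos_part_le[of "- x"] by simp
  ultimately show ?thesis
    using atom_coeff_pos_neg[OF a, of x] atom_coeff_nonneg(1)[OF a sup.cobounded2, of x]
      atom_coeff_nonneg(1)[OF a sup.cobounded2, of "- x"]
    by linarith
qed

lemma tendsto_atom_coeff:
  fixes f :: "nat \<Rightarrow> 'a::real_banach_lattice"
  assumes a: "is_atom a" and "f \<longlonglongrightarrow> l"
  shows "(\<lambda>n. atom_coeff a (f n)) \<longlonglongrightarrow> atom_coeff a l"
proof -
  have "(\<lambda>n. norm (f n - l)) \<longlonglongrightarrow> 0" using tendsto_norm_zero[OF LIM_zero[OF assms(2)]] .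
  then have "(\<lambda>n. atom_coeff a (f n) - atom_coeff a l) \<longlonglongrightarrow> 0"
    by (rule Lim_null_comparison[OF always_eventually, rotated])
      (simp only: atom_coeff_diff[OF a, symmetric] real_norm_def abs_atom_coeff_le_norm[OF a] simp_thms)
  then show ?thesis by (rule LIM_zero_cancel)
qed

lemma sum_atom_coeff_le:
  fixes u :: "'a::real_banach_lattice"
  assumes "finite F" "\<And>b. b \<in> F \<Longrightarrow> is_atom b" "0 \<le> u"
  shows "(\<Sum>b\<in>F. atom_coeff b u *\<^sub>R b) \<le> u"
  using assms
proof (induction F arbitrary: u rule: finite_induct)
  case empty
  then show ?case by simp
next
  case (insert a F)
  have a: "is_atom a" using insert.prems by simp
  define u' where "u' = u - atom_coeff a u *\<^sub>R a"
  have "0 \<le> u'" using atom_coeff_nonneg(2)[OF a insert.prems(2)] unfolding u'_def by simp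
  have same: "atom_coeff b u' = atom_coeff b u" if "b \<in> F" for b
  proof -
    have b: "is_atom b" using insert.prems(1) that by simp
    have "a \<noteq> b" using insert.hyps(2) that by auto
    then have "atom_coeff b a = 0" using atom_coeff_other_atom[OF b a] by auto
    then show ?thesis unfolding u'_def by (simp add: atom_coeff_diff[OF b] atom_coeff_scaleR[OF b])
  qed
  have IH: "(\<Sum>b\<in>F. atom_coeff b u' *\<^sub>R b) \<le> u'"
    using insert.IH[of u'] insert.prems(1) \<open>0 \<le> u'\<close> by simp
  have "(\<Sum>b\<in>insert a F. atom_coeff b u *\<^sub>R b) = atom_coeff a u *\<^sub>R a + (\<Sum>b\<in>F. atom_coeff b u' *\<^sub>R b)"
    using insert.hyps same by simp
  also have "\<dots> \<le> atom_coeff a u *\<^sub>R a + u'" using IH by (rule add_left_mono)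
  also have "\<dots> = u" unfolding u'_def by simp
  finally show ?case .
qed

lemma labs_sum_atoms_le:
  fixes x :: "'a::real_banach_lattice"
  assumes F: "finite F" and at: "\<And>b. b \<in> F \<Longrightarrow> is_atom b"
    and e: "0 \<le> e" and c: "\<And>b. b \<in> F \<Longrightarrow> \<bar>c b\<bar> \<le> e"
  shows "labs (\<Sum>b\<in>F. (c b * atom_coeff b x) *\<^sub>R b) \<le> e *\<^sub>R labs x"
proof -
  let ?p = "sup x 0" and ?q = "sup (- x) 0"
  have "labs (\<Sum>b\<in>F. (c b * atom_coeff b x) *\<^sub>R b) \<le> (\<Sum>b\<in>F. labs ((c b * atom_coeff b x) *\<^sub>R b))"
    by (rule labs_sum_le[OF F])
  also have "\<dots> = (\<Sum>b\<in>F. \<bar>c b * atom_coeff b x\<bar> *\<^sub>R b)"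
    by (rule sum.cong) (simp_all add: labs_scaleR labs_atom at)
  also have "\<dots> \<le> (\<Sum>b\<in>F. (e * (atom_coeff b ?p + atom_coeff b ?q)) *\<^sub>R b)"
  proof (rule sum_mono)
    fix b assume b: "b \<in> F"
    have "\<bar>c b * atom_coeff b x\<bar> \<le> e * (atom_coeff b ?p + atom_coeff b ?q)"
      unfolding abs_mult using c[OF b] abs_atom_coeff_le_parts[OF at[OF b], of x] e
      by (intro mult_mono) auto
    then show "\<bar>c b * atom_coeff b x\<bar> *\<^sub>R b \<le> (e * (atom_coeff b ?p + atom_coeff b ?q)) *\<^sub>R b"
      using atom_nonneg[OF at[OF b]] by (intro scaleR_right_mono)
  qed
  also have "\<dots> = e *\<^sub>R ((\<Sum>b\<in>F. atom_coeff b ?p *\<^sub>R b) + (\<Sum>b\<in>F. atom_coeff b ?q *\<^sub>R b))"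
    by (simp add: scaleR_add_right scaleR_sum_right distrib_left scaleR_add_left sum.distrib)
  also have "\<dots> \<le> e *\<^sub>R (?p + ?q)"
    using sum_atom_coeff_le[OF F at, of ?p] sum_atom_coeff_le[OF F at, of ?q] e
    by (intro scaleR_left_mono add_mono) auto
  also have "\<dots> = e *\<^sub>R labs x" by (simp add: labs_eq_pos_plus_neg)
  finally show ?thesis .
qed

lemma norm_sum_atoms_le:
  fixes x :: "'a::real_banach_lattice"
  assumes "finite F" "\<And>b. b \<in> F \<Longrightarrow> is_atom b" "0 \<le> e" "\<And>b. b \<in> F \<Longrightarrow> \<bar>c b\<bar> \<le> e"
  shows "norm (\<Sum>b\<in>F. (c b * atom_coeff b x) *\<^sub>R b) \<le> e * norm x"
  using norm_le_if_labs_le[OF labs_sum_atoms_le[OF assms]] \<open>0 \<le> e\<close> by (simp add: norm_labs)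

section \<open>Central operators and their eigenvalues at atoms\<close>

definition central_bound :: "('a::real_banach_lattice \<Rightarrow> 'a) \<Rightarrow> real \<Rightarrow> bool" where
  "central_bound S c \<longleftrightarrow> linear S \<and> 0 \<le> c \<and> (\<forall>x. labs (S x) \<le> c *\<^sub>R labs x)"

lemma central_boundD:
  assumes "central_bound S c"
  shows "linear S" "0 \<le> c" "labs (S x) \<le> c *\<^sub>R labs x"
  using assms unfolding central_bound_def by auto

lemma labs_le_if_order_bounded:
  fixes S :: "'a::real_banach_lattice \<Rightarrow> 'a"
  assumes lin: "linear S" and b: "\<And>x. 0 \<le> x \<Longrightarrow> - (c *\<^sub>R x) \<le> S x \<and> S x \<le> c *\<^sub>R x"
  shows "labs (S x) \<le> c *\<^sub>R labs x"
proof -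
  let ?p = "sup x 0" and ?q = "sup (- x) 0"
  have p: "0 \<le> ?p" and q: "0 \<le> ?q" by simp_all
  have Sx: "S x = S ?p - S ?q" using pos_part_minus_neg_part[of x] linear_diff[OF lin, of ?p ?q] by metis
  have l: "c *\<^sub>R labs x = c *\<^sub>R ?p + c *\<^sub>R ?q" by (simp add: labs_eq_pos_plus_neg scaleR_add_right)
  have "S x \<le> c *\<^sub>R ?p + c *\<^sub>R ?q"
    unfolding Sx using b[OF p] b[OF q] by (metis add_mono diff_conv_add_uminus neg_le_iff_le minus_minus)
  moreover have "- S x \<le> c *\<^sub>R ?p + c *\<^sub>R ?q"
  proof -
    have "- S x = S ?q - S ?p" unfolding Sx by simp
    also have "\<dots> \<le> c *\<^sub>R ?q + c *\<^sub>R ?p"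
      using b[OF p] b[OF q] by (metis add_mono diff_conv_add_uminus neg_le_iff_le minus_minus)
    finally show ?thesis by (simp add: add.commute)
  qed
  ultimately show ?thesis unfolding labs_le_iff l by simp
qed

lemma real_center_imp_central_bound:
  assumes "S \<in> real_center"
  obtains c where "central_bound S c"
proof -
  obtain c where lin: "linear S" and b: "\<And>x. 0 \<le> x \<Longrightarrow> - (c *\<^sub>R x) \<le> S x \<and> S x \<le> c *\<^sub>R x"
    using assms unfolding real_center_def by blast
  define c' where "c' = max c 0"
  have "- (c' *\<^sub>R x) \<le> S x \<and> S x \<le> c' *\<^sub>R x" if "0 \<le> x" for x
  proof -
    have "c *\<^sub>R x \<le> c' *\<^sub>R x" unfolding c'_def using that by (intro scaleR_right_mono) auto
    then show ?thesis using b[OF that] by (meson neg_le_iff_le order_trans)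
  qed
  then have "central_bound S c'"
    unfolding central_bound_def c'_def using lin labs_le_if_order_bounded[OF lin] by auto
  then show ?thesis by (rule that)
qed

lemma central_bound_imp_real_center:
  assumes "central_bound S c"
  shows "S \<in> real_center"
proof -
  have "- (c *\<^sub>R x) \<le> S x \<and> S x \<le> c *\<^sub>R x" if "0 \<le> x" for x
  proof -
    have "S x \<le> c *\<^sub>R x \<and> - S x \<le> c *\<^sub>R x"
      using central_boundD(3)[OF assms, of x] labs_of_nonneg[OF that] unfolding labs_le_iff by simp
    then show ?thesis by (metis minus_le_iff)
  qed
  then show ?thesis unfolding real_center_def using central_boundD(1)[OF assms] by blast
qed

lemma central_bound_diff:
  assumes S: "central_bound S c" and R: "central_bound R d"
  shows "central_bound (\<lambda>x. S x - R x) (c + d)"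
proof -
  have "linear (\<lambda>x. S x - R x)"
    using central_boundD(1)[OF S] central_boundD(1)[OF R] by (rule linear_compose_sub)
  moreover have "labs (S x - R x) \<le> (c + d) *\<^sub>R labs x" for x
  proof -
    have "labs (S x - R x) \<le> labs (S x) + labs (R x)" by (rule labs_diff_le)
    also have "\<dots> \<le> c *\<^sub>R labs x + d *\<^sub>R labs x"
      using central_boundD(3)[OF S] central_boundD(3)[OF R] by (rule add_mono)
    also have "\<dots> = (c + d) *\<^sub>R labs x" by (simp add: scaleR_add_left)
    finally show ?thesis .
  qed
  moreover have "0 \<le> c + d" using central_boundD(2)[OF S] central_boundD(2)[OF R] by simp
  ultimately show ?thesis unfolding central_bound_def by blast
qed

definition atom_eigenvalue :: "('a::real_banach_lattice \<Rightarrow> 'a) \<Rightarrow> 'a \<Rightarrow> real" where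
  "atom_eigenvalue S a = (SOME t. S a = t *\<^sub>R a)"

lemma central_maps_atom_to_multiple:
  fixes a :: "'a::real_banach_lattice"
  assumes S: "central_bound S c" and a: "is_atom a"
  shows "\<exists>t. S a = t *\<^sub>R a"
proof (cases "c = 0")
  case True
  then have "labs (S a) \<le> 0" using central_boundD(3)[OF S, of a] by simp
  then have "S a = 0" using labs_nonneg[of "S a"] labs_eq_0_iff by (metis order_antisym)
  then show ?thesis by (intro exI[of _ 0]) simp
next
  case False
  then have c: "0 < c" using central_boundD(2)[OF S] by simp
  have up: "S a \<le> c *\<^sub>R a" and lo: "- S a \<le> c *\<^sub>R a"
    using central_boundD(3)[OF S, of a] unfolding labs_atom[OF a] labs_le_iff by auto
  \<comment> \<open>\<open>S a + c a\<close> lies between \<open>0\<close> and \<open>2 c a\<close>, hence is a multiple of the atom\<close>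
  define v where "v = (1 / (2 * c)) *\<^sub>R (S a + c *\<^sub>R a)"
  have "0 \<le> S a + c *\<^sub>R a" using add_right_mono[OF lo, of "S a"] by (simp add: add.commute)
  then have "0 \<le> v" unfolding v_def using c by (intro scaleR_nonneg_nonneg) auto
  have "S a + c *\<^sub>R a \<le> (2 * c) *\<^sub>R a"
    using add_right_mono[OF up, of "c *\<^sub>R a"] by (metis mult_2 scaleR_add_left)
  then have "v \<le> (1 / (2 * c)) *\<^sub>R ((2 * c) *\<^sub>R a)" unfolding v_def using c by (intro scaleR_left_mono) auto
  then have "v \<le> a" using c by simp
  then obtain r where r: "v = r *\<^sub>R a" using a \<open>0 \<le> v\<close> unfolding is_atom_def by blast
  have "S a + c *\<^sub>R a = (2 * c) *\<^sub>R v" unfolding v_def using c by simp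
  then have "S a = (2 * c * r - c) *\<^sub>R a" unfolding r by (simp add: algebra_simps scaleR_diff_left)
  then show ?thesis by blast
qed

lemma central_atom_eigenvalue:
  assumes "central_bound S c" "is_atom a"
  shows "S a = atom_eigenvalue S a *\<^sub>R a"
  unfolding atom_eigenvalue_def using someI_ex[OF central_maps_atom_to_multiple[OF assms]] .

lemma abs_atom_eigenvalue_le:
  assumes S: "central_bound S c" and a: "is_atom a"
  shows "\<bar>atom_eigenvalue S a\<bar> \<le> c"
proof -
  have "\<bar>atom_eigenvalue S a\<bar> *\<^sub>R a \<le> c *\<^sub>R a"
    using central_boundD(3)[OF S, of a] central_atom_eigenvalue[OF S a]
    by (simp add: labs_scaleR labs_atom[OF a])
  then show ?thesis using scaleR_le_scaleR_iff_pos[OF atom_pos[OF a]] by blast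
qed

lemma atom_coeff_central:
  fixes x :: "'a::real_banach_lattice"
  assumes S: "central_bound S c" and b: "is_atom b"
  shows "atom_coeff b (S x) = atom_eigenvalue S b * atom_coeff b x"
proof (rule atom_coeff_eqI[OF b])
  have lin: "linear S" using central_boundD(1)[OF S] .
  define x' where "x' = x - atom_coeff b x *\<^sub>R b"
  have "ldisj x' b" unfolding x'_def by (rule ldisj_diff_atom_coeff[OF b])
  then have "ldisj (S x') b" using central_boundD(3)[OF S] by (rule ldisj_dominated[rotated])
  moreover have "S x = atom_coeff b x *\<^sub>R S b + S x'"
    unfolding x'_def by (simp add: linear_diff[OF lin] linear_scale[OF lin])
  then have "S x - (atom_eigenvalue S b * atom_coeff b x) *\<^sub>R b = S x'"
    using central_atom_eigenvalue[OF S b] by (simp add: algebra_simps)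
  ultimately show "ldisj (S x - (atom_eigenvalue S b * atom_coeff b x) *\<^sub>R b) b" by simp
qed

section \<open>The atomic part of a central operator\<close>

lemma Cauchy_if_dist_le_vanishing:
  fixes X :: "nat \<Rightarrow> 'a::metric_space"
  assumes "\<And>m n. m \<le> n \<Longrightarrow> dist (X n) (X m) \<le> e m" and "e \<longlonglongrightarrow> 0"
  shows "Cauchy X"
  unfolding Cauchy_altdef2
proof (intro allI impI)
  fix \<epsilon> :: real
  assume "0 < \<epsilon>"
  then obtain N where "e N < \<epsilon>"
    using order_tendstoD(2)[OF assms(2)] by (meson eventually_sequentially order_refl)
  then show "\<exists>N. \<forall>n\<ge>N. dist (X n) (X N) < \<epsilon>" using assms(1) by (meson order_le_less_trans)
qed

lemma compact_closure_if_approximable: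
  fixes S :: "'a::complete_space set"
  assumes approx: "\<And>e. 0 < e \<Longrightarrow> \<exists>K. compact K \<and> (\<forall>x\<in>S. \<exists>y\<in>K. dist x y \<le> e)"
  shows "compact (closure S)"
  unfolding compact_eq_totally_bounded
proof (intro conjI allI impI)
  show "complete (closure S)" by (simp add: complete_eq_closed)
  fix e :: real
  assume "0 < e"
  then obtain K where K: "compact K" "\<forall>x\<in>S. \<exists>y\<in>K. dist x y \<le> e / 4"
    using approx[of "e / 4"] by auto
  have "0 < e / 4" using \<open>0 < e\<close> by simp
  then obtain k where k: "finite k" "K \<subseteq> (\<Union>z\<in>k. ball z (e / 4))"
    using K(1) unfolding compact_eq_totally_bounded by blast
  have "S \<subseteq> (\<Union>z\<in>k. cball z (e / 2))"
  proof
    fix x assume "x \<in> S"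
    then have "\<exists>y\<in>K. dist x y \<le> e / 4" by (rule bspec[OF K(2)])
    then obtain y where y: "y \<in> K" "dist x y \<le> e / 4" by (rule bexE)
    have "y \<in> (\<Union>z\<in>k. ball z (e / 4))" using y(1) k(2) by (rule rev_subsetD)
    then obtain z where z: "z \<in> k" "y \<in> ball z (e / 4)" by (rule UN_E)
    have "dist z x \<le> dist z y + dist y x" by (rule dist_triangle)
    then have "x \<in> cball z (e / 2)" using y(2) z(2) dist_commute[of y x] by simp
    then show "x \<in> (\<Union>z\<in>k. cball z (e / 2))" using z(1) by blast
  qed
  moreover have "closed (\<Union>z\<in>k. cball z (e / 2))" using k(1) by (intro closed_UN) auto
  ultimately have "closure S \<subseteq> (\<Union>z\<in>k. cball z (e / 2))" by (rule closure_minimal)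
  also have "\<dots> \<subseteq> (\<Union>z\<in>k. ball z e)"
    using \<open>0 < e\<close> by (intro UN_mono order_refl) (simp add: subset_eq)
  finally show "\<exists>k. finite k \<and> closure S \<subseteq> (\<Union>z\<in>k. ball z e)" using k(1) by blast
qed

lemma compact_bounded_combinations:
  fixes F :: "'a::real_normed_vector set"
  assumes "finite F"
  shows "compact {\<Sum>a\<in>F. \<alpha> a *\<^sub>R a | \<alpha>. \<forall>a\<in>F. \<bar>\<alpha> a\<bar> \<le> M}"
  using assms
proof (induction F rule: finite_induct)
  case empty
  have "{\<Sum>a\<in>{}. \<alpha> a *\<^sub>R a | \<alpha>. \<forall>a\<in>({}::'a set). \<bar>\<alpha> a\<bar> \<le> M} = {0}" by simp
  then show ?case by simp
next
  case (insert b F)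
  let ?C = "\<lambda>F. {\<Sum>a\<in>F. \<alpha> a *\<^sub>R a | \<alpha>. \<forall>a\<in>F. \<bar>\<alpha> a\<bar> \<le> M}"
  have eq: "?C (insert b F) = {p + q | p q. p \<in> (\<lambda>t. t *\<^sub>R b) ` {-M..M} \<and> q \<in> ?C F}"
  proof (intro equalityI subsetI)
    fix x assume "x \<in> ?C (insert b F)"
    then obtain \<alpha> where "x = \<alpha> b *\<^sub>R b + (\<Sum>a\<in>F. \<alpha> a *\<^sub>R a)" "\<forall>a\<in>insert b F. \<bar>\<alpha> a\<bar> \<le> M"
      using insert.hyps by auto
    then show "x \<in> {p + q | p q. p \<in> (\<lambda>t. t *\<^sub>R b) ` {-M..M} \<and> q \<in> ?C F}"
      by (fastforce simp: abs_le_iff)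
  next
    fix x assume "x \<in> {p + q | p q. p \<in> (\<lambda>t. t *\<^sub>R b) ` {-M..M} \<and> q \<in> ?C F}"
    then obtain t \<alpha> where x: "x = t *\<^sub>R b + (\<Sum>a\<in>F. \<alpha> a *\<^sub>R a)"
      and t: "\<bar>t\<bar> \<le> M" and \<alpha>: "\<forall>a\<in>F. \<bar>\<alpha> a\<bar> \<le> M"
      by (auto simp: abs_le_iff)
    have "(\<Sum>a\<in>F. (\<alpha>(b := t)) a *\<^sub>R a) = (\<Sum>a\<in>F. \<alpha> a *\<^sub>R a)"
      using insert.hyps(2) by (intro sum.cong) auto
    then have "x = (\<Sum>a\<in>insert b F. (\<alpha>(b := t)) a *\<^sub>R a)" using insert.hyps x by simp
    moreover have "\<forall>a\<in>insert b F. \<bar>(\<alpha>(b := t)) a\<bar> \<le> M" using t \<alpha> by simp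
    ultimately show "x \<in> ?C (insert b F)" by blast
  qed
  have "compact ((\<lambda>t. t *\<^sub>R b) ` {-M..M})"
    by (intro compact_continuous_image continuous_intros) simp
  then show ?case unfolding eq using insert.IH by (rule compact_sums)
qed

definition large_atoms :: "('a::real_banach_lattice \<Rightarrow> 'a) \<Rightarrow> nat \<Rightarrow> 'a set" where
  "large_atoms S n = {a. is_atom a \<and> inverse (real (Suc n)) \<le> \<bar>atom_eigenvalue S a\<bar>}"

definition atomic_trunc :: "('a::real_banach_lattice \<Rightarrow> 'a) \<Rightarrow> nat \<Rightarrow> 'a \<Rightarrow> 'a" where
  "atomic_trunc S n x = (\<Sum>a\<in>large_atoms S n. (atom_eigenvalue S a * atom_coeff a x) *\<^sub>R a)"

definition atomic_part :: "('a::real_banach_lattice \<Rightarrow> 'a) \<Rightarrow> 'a \<Rightarrow> 'a" where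
  "atomic_part S x = lim (\<lambda>n. atomic_trunc S n x)"

lemma large_atoms_atom: "a \<in> large_atoms S n \<Longrightarrow> is_atom a"
  unfolding large_atoms_def by simp

lemma large_atoms_mono:
  assumes "m \<le> n"
  shows "large_atoms S m \<subseteq> large_atoms S n"
proof
  fix a assume a: "a \<in> large_atoms S m"
  have "inverse (real (Suc n)) \<le> inverse (real (Suc m))" using assms by (simp add: le_imp_inverse_le)
  also have "\<dots> \<le> \<bar>atom_eigenvalue S a\<bar>" using a unfolding large_atoms_def by simp
  finally show "a \<in> large_atoms S n" using a unfolding large_atoms_def by blast
qed

text \<open>The finiteness hypothesis of this locale is what compactness on the band generated by the
  atoms provides.\<close>

locale central_finite_large_atoms =
  fixes S :: "'a::real_banach_lattice \<Rightarrow> 'a" and c :: real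
  assumes central: "central_bound S c"
    and finite_large_atoms: "\<And>n. finite (large_atoms S n)"
begin

lemma norm_atomic_trunc_diff_le:
  assumes "m \<le> n"
  shows "norm (atomic_trunc S n x - atomic_trunc S m x) \<le> inverse (real (Suc m)) * norm x"
proof -
  have "atomic_trunc S n x - atomic_trunc S m x
      = (\<Sum>a\<in>large_atoms S n - large_atoms S m. (atom_eigenvalue S a * atom_coeff a x) *\<^sub>R a)"
    unfolding atomic_trunc_def
    by (rule sum_diff[OF finite_large_atoms large_atoms_mono[OF assms], symmetric])
  also have "norm \<dots> \<le> inverse (real (Suc m)) * norm x"
  proof (rule norm_sum_atoms_le)
    show "finite (large_atoms S n - large_atoms S m)" using finite_large_atoms by simp
    show "\<And>b. b \<in> large_atoms S n - large_atoms S m \<Longrightarrow> is_atom b"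
      by (auto dest: large_atoms_atom)
    show "\<And>b. b \<in> large_atoms S n - large_atoms S m \<Longrightarrow> \<bar>atom_eigenvalue S b\<bar> \<le> inverse (real (Suc m))"
      unfolding large_atoms_def by auto
  qed simp
  finally show ?thesis .
qed

lemma LIMSEQ_atomic_trunc: "(\<lambda>n. atomic_trunc S n x) \<longlonglongrightarrow> atomic_part S x"
proof -
  have "(\<lambda>m. inverse (real (Suc m)) * norm x) \<longlonglongrightarrow> 0 * norm x"
    by (intro tendsto_mult LIMSEQ_inverse_real_of_nat tendsto_const)
  then have "Cauchy (\<lambda>n. atomic_trunc S n x)"
    by (intro Cauchy_if_dist_le_vanishing[of _ "\<lambda>m. inverse (real (Suc m)) * norm x"])
      (simp_all only: dist_norm norm_atomic_trunc_diff_le mult_zero_left)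
  then show ?thesis
    unfolding atomic_part_def by (simp add: Cauchy_convergent_iff convergent_LIMSEQ_iff)
qed

lemma norm_atomic_part_diff_trunc_le:
  "norm (atomic_part S x - atomic_trunc S m x) \<le> inverse (real (Suc m)) * norm x"
proof (rule LIMSEQ_le_const2)
  show "(\<lambda>n. norm (atomic_trunc S n x - atomic_trunc S m x)) \<longlonglongrightarrow> norm (atomic_part S x - atomic_trunc S m x)"
    by (intro tendsto_norm tendsto_diff LIMSEQ_atomic_trunc tendsto_const)
  show "\<exists>N. \<forall>n\<ge>N. norm (atomic_trunc S n x - atomic_trunc S m x) \<le> inverse (real (Suc m)) * norm x"
    using norm_atomic_trunc_diff_le by blast
qed

lemma atomic_trunc_add: "atomic_trunc S n (x + y) = atomic_trunc S n x + atomic_trunc S n y"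
  unfolding atomic_trunc_def
  by (simp add: atom_coeff_add large_atoms_atom distrib_left scaleR_add_left sum.distrib[symmetric]
      cong: sum.cong)

lemma atomic_trunc_scaleR: "atomic_trunc S n (r *\<^sub>R x) = r *\<^sub>R atomic_trunc S n x"
  unfolding atomic_trunc_def
  by (simp add: atom_coeff_scaleR large_atoms_atom scaleR_sum_right mult.left_commute cong: sum.cong)

lemma linear_atomic_part: "linear (atomic_part S)"
proof (rule linearI)
  fix x y
  have "(\<lambda>n. atomic_trunc S n (x + y)) \<longlonglongrightarrow> atomic_part S x + atomic_part S y"
    unfolding atomic_trunc_add by (intro tendsto_add LIMSEQ_atomic_trunc)
  then show "atomic_part S (x + y) = atomic_part S x + atomic_part S y"
    using LIMSEQ_atomic_trunc LIMSEQ_unique by blast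
next
  fix r x
  have "(\<lambda>n. atomic_trunc S n (r *\<^sub>R x)) \<longlonglongrightarrow> r *\<^sub>R atomic_part S x"
    unfolding atomic_trunc_scaleR by (intro tendsto_scaleR tendsto_const LIMSEQ_atomic_trunc)
  then show "atomic_part S (r *\<^sub>R x) = r *\<^sub>R atomic_part S x"
    using LIMSEQ_atomic_trunc LIMSEQ_unique by blast
qed

lemma central_bound_atomic_part: "central_bound (atomic_part S) c"
proof -
  have "labs (atomic_trunc S n x) \<le> c *\<^sub>R labs x" for n x
    unfolding atomic_trunc_def
    using central_boundD(2)[OF central] abs_atom_eigenvalue_le[OF central]
    by (intro labs_sum_atoms_le) (auto simp: finite_large_atoms large_atoms_atom)
  then have "labs (atomic_part S x) \<le> c *\<^sub>R labs x" for x
    by (intro LIMSEQ_le_lattice[OF tendsto_labs[OF LIMSEQ_atomic_trunc] tendsto_const]) simp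
  then show ?thesis
    unfolding central_bound_def using linear_atomic_part central_boundD(2)[OF central] by blast
qed

lemma atomic_part_eq_0:
  assumes "\<And>a. is_atom a \<Longrightarrow> ldisj x a"
  shows "atomic_part S x = 0"
proof -
  have "atomic_trunc S n x = 0" for n
    unfolding atomic_trunc_def using assms by (simp add: atom_coeff_ldisj large_atoms_atom cong: sum.cong)
  then have "(\<lambda>n. 0) \<longlonglongrightarrow> atomic_part S x" using LIMSEQ_atomic_trunc[of x] by simp
  then show ?thesis using LIMSEQ_unique tendsto_const by metis
qed

lemma atom_coeff_atomic_trunc:
  assumes b: "is_atom b"
  shows "atom_coeff b (atomic_trunc S n x)
    = (if b \<in> large_atoms S n then atom_eigenvalue S b * atom_coeff b x else 0)"
proof -
  have "atom_coeff b (atomic_trunc S n x)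
      = (\<Sum>a\<in>large_atoms S n. atom_eigenvalue S a * atom_coeff a x * atom_coeff b a)"
    unfolding atomic_trunc_def by (simp add: atom_coeff_sum[OF b finite_large_atoms] atom_coeff_scaleR[OF b])
  also have "\<dots> = (\<Sum>a\<in>large_atoms S n. if a = b then atom_eigenvalue S a * atom_coeff a x else 0)"
    by (rule sum.cong) (auto simp: atom_coeff_self[OF b] atom_coeff_other_atom[OF b] large_atoms_atom)
  also have "\<dots> = (if b \<in> large_atoms S n then atom_eigenvalue S b * atom_coeff b x else 0)"
    by (simp add: finite_large_atoms)
  finally show ?thesis .
qed

lemma atom_coeff_atomic_part:
  assumes b: "is_atom b"
  shows "atom_coeff b (atomic_part S x) = atom_eigenvalue S b * atom_coeff b x"
proof -
  have ev: "eventually (\<lambda>n. atom_coeff b (atomic_trunc S n x) = atom_eigenvalue S b * atom_coeff b x)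
      sequentially"
  proof (cases "atom_eigenvalue S b = 0")
    case True
    then show ?thesis by (intro always_eventually allI) (simp add: atom_coeff_atomic_trunc[OF b])
  next
    case False
    then have "0 < \<bar>atom_eigenvalue S b\<bar>" by simp
    then obtain N where N: "inverse (real (Suc N)) < \<bar>atom_eigenvalue S b\<bar>"
      using reals_Archimedean by blast
    show ?thesis
    proof (rule eventually_sequentiallyI[of N])
      fix n assume "N \<le> n"
      have "b \<in> large_atoms S N" using N b unfolding large_atoms_def by simp
      then have "b \<in> large_atoms S n" using large_atoms_mono[OF \<open>N \<le> n\<close>] by blast
      then show "atom_coeff b (atomic_trunc S n x) = atom_eigenvalue S b * atom_coeff b x"
        by (simp add: atom_coeff_atomic_trunc[OF b])
    qed
  qed
  have "(\<lambda>n. atom_coeff b (atomic_trunc S n x)) \<longlonglongrightarrow> atom_coeff b (atomic_part S x)"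
    by (rule tendsto_atom_coeff[OF b LIMSEQ_atomic_trunc])
  then have "(\<lambda>n. atom_eigenvalue S b * atom_coeff b x) \<longlonglongrightarrow> atom_coeff b (atomic_part S x)"
    by (rule tendsto_cong[OF ev, THEN iffD1])
  then show ?thesis using LIMSEQ_unique tendsto_const by metis
qed

lemma ldisj_atomic_part:
  assumes "\<And>a. is_atom a \<Longrightarrow> ldisj a u"
  shows "ldisj (atomic_part S x) u"
proof (rule ldisj_LIMSEQ[OF LIMSEQ_atomic_trunc])
  show "eventually (\<lambda>n. ldisj (atomic_trunc S n x) u) sequentially"
    unfolding atomic_trunc_def using assms finite_large_atoms
    by (intro always_eventually allI ldisj_sum ldisj_scaleR) (auto simp: large_atoms_atom)
qed

text \<open>On the band generated by the atoms, \<open>S\<close> coincides with its atomic part: the difference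
  has no atomic coefficients, so it is disjoint from every atom; as \<open>x\<close> lies in the band, the
  difference is disjoint from \<open>x\<close> and hence from both \<open>S x\<close> and the atomic part, that is,
  from itself.\<close>

lemma atomic_part_eq_on_atomic_band:
  assumes band: "\<And>u. (\<And>a. is_atom a \<Longrightarrow> ldisj u a) \<Longrightarrow> ldisj x u"
  shows "atomic_part S x = S x"
proof -
  define d where "d = S x - atomic_part S x"
  have "atom_coeff b d = 0" if "is_atom b" for b
    unfolding d_def using atom_coeff_central[OF central that] atom_coeff_atomic_part[OF that]
    by (simp add: atom_coeff_diff[OF that])
  then have d_atoms: "ldisj d b" if "is_atom b" for b
    using ldisj_diff_atom_coeff[OF that, of d] that by simp
  then have "ldisj x d" by (rule band)
  then have "ldisj (S x) d" using central_boundD(3)[OF central] by (rule ldisj_dominated[rotated])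
  moreover have "ldisj (atomic_part S x) d" by (rule ldisj_atomic_part) (rule ldisj_sym[OF d_atoms])
  ultimately have "ldisj d d" unfolding d_def by (rule ldisj_diff)
  then have "d = 0" by (rule ldisj_self)
  then show ?thesis unfolding d_def by simp
qed

lemma compact_closure_atomic_part_ball: "compact (closure (atomic_part S ` {x. norm x \<le> 1}))"
proof (rule compact_closure_if_approximable)
  fix e :: real
  assume "0 < e"
  then obtain n where n: "inverse (real (Suc n)) < e" using reals_Archimedean by blast
  let ?K = "{\<Sum>a\<in>large_atoms S n. \<alpha> a *\<^sub>R a | \<alpha>. \<forall>a\<in>large_atoms S n. \<bar>\<alpha> a\<bar> \<le> c}"
  have approx: "\<exists>y\<in>?K. dist (atomic_part S x) y \<le> e" if x: "norm x \<le> 1" for x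
  proof
    have "\<bar>atom_eigenvalue S a * atom_coeff a x\<bar> \<le> c" if "a \<in> large_atoms S n" for a
    proof -
      have a: "is_atom a" using that by (rule large_atoms_atom)
      have "\<bar>atom_coeff a x\<bar> \<le> 1" using abs_atom_coeff_le_norm[OF a, of x] x by linarith
      then have "\<bar>atom_eigenvalue S a\<bar> * \<bar>atom_coeff a x\<bar> \<le> c * 1"
        using abs_atom_eigenvalue_le[OF central a] central_boundD(2)[OF central] by (intro mult_mono) simp_all
      then show ?thesis by (simp add: abs_mult)
    qed
    then show "atomic_trunc S n x \<in> ?K"
      unfolding atomic_trunc_def by (intro CollectI exI[of _ "\<lambda>a. atom_eigenvalue S a * atom_coeff a x"]) simp
    have "inverse (real (Suc n)) * norm x \<le> inverse (real (Suc n))"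
      using x by (intro mult_left_le) simp_all
    then show "dist (atomic_part S x) (atomic_trunc S n x) \<le> e"
      using norm_atomic_part_diff_trunc_le[of x n] n unfolding dist_norm by linarith
  qed
  show "\<exists>K. compact K \<and> (\<forall>y\<in>atomic_part S ` {x. norm x \<le> 1}. \<exists>z\<in>K. dist y z \<le> e)"
  proof (intro exI conjI ballI)
    show "compact ?K" by (rule compact_bounded_combinations[OF finite_large_atoms])
    fix y assume "y \<in> atomic_part S ` {x. norm x \<le> 1}"
    then obtain x where "norm x \<le> 1" "y = atomic_part S x" by blast
    then show "\<exists>z\<in>?K. dist y z \<le> e" using approx by simp
  qed
qed

end

section \<open>Existence of the modulus in the complexification\<close>

text \<open>The modulus \<open>cabs (x, y)\<close> is the supremum of \<open>cos t x + sin t y\<close> over all angles \<open>t\<close>.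
  It is the limit of the finite suprema over the dyadic angles \<open>2 \<pi> k / 2 ^ n\<close>: these increase
  with \<open>n\<close>, and since \<open>t \<mapsto> cos t x + sin t y\<close> is Lipschitz with constant \<open>labs x + labs y\<close>,
  they come within \<open>2 \<pi> / 2 ^ n\<close> times that constant of every value.\<close>

definition cis_comb :: "'a::real_banach_lattice \<Rightarrow> 'a \<Rightarrow> real \<Rightarrow> 'a" where
  "cis_comb x y t = cos t *\<^sub>R x + sin t *\<^sub>R y"

definition dyadic_step :: "nat \<Rightarrow> real" where
  "dyadic_step n = 2 * pi / 2 ^ n"

definition dyadic_sup :: "'a::real_banach_lattice \<Rightarrow> 'a \<Rightarrow> nat \<Rightarrow> 'a" where
  "dyadic_sup x y n = Sup_fin ((\<lambda>k. cis_comb x y (real k * dyadic_step n)) ` {..2 ^ n})"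

lemma abs_cos_diff_le: "\<bar>cos a - cos b\<bar> \<le> \<bar>a - (b::real)\<bar>"
proof -
  have "\<bar>cos a - cos b\<bar> = 2 * \<bar>sin ((a + b) / 2)\<bar> * \<bar>sin ((b - a) / 2)\<bar>"
    by (simp add: cos_diff_cos abs_mult)
  also have "\<dots> \<le> 2 * 1 * \<bar>(b - a) / 2\<bar>"
    by (intro mult_mono abs_sin_x_le_abs_x) auto
  finally show ?thesis by simp
qed

lemma abs_sin_diff_le: "\<bar>sin a - sin b\<bar> \<le> \<bar>a - (b::real)\<bar>"
proof -
  have "\<bar>sin a - sin b\<bar> = 2 * \<bar>sin ((a - b) / 2)\<bar> * \<bar>cos ((a + b) / 2)\<bar>"
    by (simp add: sin_diff_sin abs_mult)
  also have "\<dots> \<le> 2 * \<bar>(a - b) / 2\<bar> * 1"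
    by (intro mult_mono abs_sin_x_le_abs_x) auto
  finally show ?thesis by simp
qed

lemma cis_comb_diff_le: "cis_comb x y t - cis_comb x y s \<le> \<bar>t - s\<bar> *\<^sub>R (labs x + labs y)"
proof -
  have "cis_comb x y t - cis_comb x y s = (cos t - cos s) *\<^sub>R x + (sin t - sin s) *\<^sub>R y"
    unfolding cis_comb_def by (simp add: scaleR_diff_left algebra_simps)
  also have "\<dots> \<le> \<bar>cos t - cos s\<bar> *\<^sub>R labs x + \<bar>sin t - sin s\<bar> *\<^sub>R labs y"
    by (intro add_mono scaleR_le_labs)
  also have "\<dots> \<le> \<bar>t - s\<bar> *\<^sub>R labs x + \<bar>t - s\<bar> *\<^sub>R labs y"
    by (intro add_mono scaleR_right_mono abs_cos_diff_le abs_sin_diff_le labs_nonneg)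
  also have "\<dots> = \<bar>t - s\<bar> *\<^sub>R (labs x + labs y)" by (simp add: scaleR_add_right)
  finally show ?thesis .
qed

lemma cis_comb_periodic: "cis_comb x y (t + real_of_int q * (2 * pi)) = cis_comb x y t"
proof -
  have "cos (real_of_int q * (2 * pi)) = 1" using cos_int_2pin[of q] by (simp add: mult.commute)
  moreover have "sin (real_of_int q * (2 * pi)) = 0" using sin_int_2pin[of q] by (simp add: mult.commute)
  ultimately show ?thesis unfolding cis_comb_def by (simp add: cos_add sin_add)
qed

lemma dyadic_step_pos: "0 < dyadic_step n"
  unfolding dyadic_step_def by simp

lemma LIMSEQ_dyadic_step: "dyadic_step \<longlonglongrightarrow> 0"
proof -
  have "(\<lambda>n. 2 * pi * (1 / 2) ^ n) \<longlonglongrightarrow> 2 * pi * (0::real)"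
    by (intro tendsto_mult tendsto_const LIMSEQ_realpow_zero) simp_all
  then show ?thesis unfolding dyadic_step_def[abs_def] by (simp add: power_one_over)
qed

lemma cis_comb_le_dyadic_sup: "k \<le> 2 ^ n \<Longrightarrow> cis_comb x y (real k * dyadic_step n) \<le> dyadic_sup x y n"
  unfolding dyadic_sup_def by (rule Sup_fin.coboundedI) auto

lemma dyadic_sup_least:
  "(\<And>k. k \<le> 2 ^ n \<Longrightarrow> cis_comb x y (real k * dyadic_step n) \<le> v) \<Longrightarrow> dyadic_sup x y n \<le> v"
  unfolding dyadic_sup_def by (rule Sup_fin.boundedI) auto

lemma dyadic_sup_mono: "n \<le> m \<Longrightarrow> dyadic_sup x y n \<le> dyadic_sup x y m"
proof (induction m rule: dec_induct)
  case (step m)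
  have "cis_comb x y (real k * dyadic_step m) \<le> dyadic_sup x y (Suc m)" if "k \<le> 2 ^ m" for k
  proof -
    have "real k * dyadic_step m = real (2 * k) * dyadic_step (Suc m)"
      unfolding dyadic_step_def by simp
    then have "cis_comb x y (real k * dyadic_step m) = cis_comb x y (real (2 * k) * dyadic_step (Suc m))"
      by (simp only:)
    also have "\<dots> \<le> dyadic_sup x y (Suc m)" using that by (intro cis_comb_le_dyadic_sup) simp
    finally show ?thesis .
  qed
  then show ?case using step.IH by (blast intro: order_trans dyadic_sup_least)
qed simp

lemma cis_comb_le_dyadic_sup_plus:
  "cis_comb x y t \<le> dyadic_sup x y n + dyadic_step n *\<^sub>R (labs x + labs y)"
proof -
  let ?d = "dyadic_step n"
  define j where "j = \<lfloor>t / ?d\<rfloor>"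
  have "real_of_int j \<le> t / ?d" unfolding j_def by (rule of_int_floor_le)
  then have j1: "real_of_int j * ?d \<le> t" using pos_le_divide_eq[OF dyadic_step_pos] by blast
  have "t / ?d < real_of_int j + 1" unfolding j_def by (rule real_of_int_floor_add_one_gt)
  then have j2: "t < (real_of_int j + 1) * ?d" using pos_divide_less_eq[OF dyadic_step_pos] by blast
  define k where "k = j mod 2 ^ n"
  have k: "0 \<le> k" "k < 2 ^ n" unfolding k_def by simp_all
  define q where "q = j div 2 ^ n"
  have "j = q * 2 ^ n + k" unfolding q_def k_def by (rule div_mult_mod_eq[symmetric])
  then have "real_of_int j * ?d = real_of_int k * ?d + real_of_int q * (2 ^ n * ?d)"
    by (simp add: algebra_simps)
  also have "2 ^ n * ?d = 2 * pi" unfolding dyadic_step_def by simp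
  finally have "real_of_int j * ?d = real_of_int k * ?d + real_of_int q * (2 * pi)" .
  then have "cis_comb x y (real_of_int j * ?d) = cis_comb x y (real (nat k) * ?d)"
    using k(1) by (simp add: cis_comb_periodic)
  also have "\<dots> \<le> dyadic_sup x y n"
    using k by (intro cis_comb_le_dyadic_sup) (simp add: nat_less_iff)
  finally have grid: "cis_comb x y (real_of_int j * ?d) \<le> dyadic_sup x y n" .
  have "cis_comb x y t - cis_comb x y (real_of_int j * ?d) \<le> \<bar>t - real_of_int j * ?d\<bar> *\<^sub>R (labs x + labs y)"
    by (rule cis_comb_diff_le)
  also have "\<dots> \<le> ?d *\<^sub>R (labs x + labs y)"
    using j1 j2 by (intro scaleR_right_mono add_nonneg_nonneg labs_nonneg) (auto simp: algebra_simps)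
  finally have "cis_comb x y t \<le> ?d *\<^sub>R (labs x + labs y) + cis_comb x y (real_of_int j * ?d)"
    by (simp only: diff_le_eq)
  also have "\<dots> \<le> ?d *\<^sub>R (labs x + labs y) + dyadic_sup x y n" using grid by (rule add_left_mono)
  finally show ?thesis by (simp only: add.commute)
qed

lemma dyadic_sup_le_plus: "dyadic_sup x y m \<le> dyadic_sup x y n + dyadic_step n *\<^sub>R (labs x + labs y)"
  by (rule dyadic_sup_least) (rule cis_comb_le_dyadic_sup_plus)

lemma cabs_is_sup:
  fixes x y :: "'a::real_banach_lattice"
  shows "(\<forall>t. cis_comb x y t \<le> cabs (x, y)) \<and> (\<forall>v. (\<forall>t. cis_comb x y t \<le> v) \<longrightarrow> cabs (x, y) \<le> v)"
proof -
  let ?w = "labs x + labs y"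
  have "dist (dyadic_sup x y m) (dyadic_sup x y n) \<le> dyadic_step n * norm ?w" if "n \<le> m" for m n
  proof -
    have "0 \<le> dyadic_sup x y m - dyadic_sup x y n" using dyadic_sup_mono[OF that] by simp
    moreover have "dyadic_sup x y m - dyadic_sup x y n \<le> dyadic_step n *\<^sub>R ?w"
      using dyadic_sup_le_plus[of x y m n] by (simp add: diff_le_eq add.commute)
    ultimately have "norm (dyadic_sup x y m - dyadic_sup x y n) \<le> norm (dyadic_step n *\<^sub>R ?w)"
      by (rule norm_mono_nonneg)
    then show ?thesis using dyadic_step_pos[of n] by (simp add: dist_norm)
  qed
  moreover have "(\<lambda>n. dyadic_step n * norm ?w) \<longlonglongrightarrow> 0"
    using tendsto_mult[OF LIMSEQ_dyadic_step tendsto_const[of "norm ?w"]] by simp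
  ultimately have "Cauchy (dyadic_sup x y)" by (rule Cauchy_if_dist_le_vanishing)
  then obtain L where L: "dyadic_sup x y \<longlonglongrightarrow> L" using Cauchy_convergent_iff convergent_def by blast
  have "(\<lambda>n. dyadic_sup x y n + dyadic_step n *\<^sub>R ?w) \<longlonglongrightarrow> L + 0 *\<^sub>R ?w"
    by (intro tendsto_add L tendsto_scaleR LIMSEQ_dyadic_step tendsto_const)
  then have lim: "(\<lambda>n. dyadic_sup x y n + dyadic_step n *\<^sub>R ?w) \<longlonglongrightarrow> L"
    by (simp only: scaleR_zero_left add_0_right)
  have upper: "cis_comb x y t \<le> L" for t
    by (rule LIMSEQ_le_lattice[OF tendsto_const lim always_eventually])
      (rule allI, rule cis_comb_le_dyadic_sup_plus)
  have least: "L \<le> v" if "\<forall>t. cis_comb x y t \<le> v" for v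
    by (rule LIMSEQ_le_lattice[OF L tendsto_const always_eventually])
      (rule allI, rule dyadic_sup_least, use that in blast)
  let ?P = "\<lambda>u. (\<forall>t. cis_comb x y t \<le> u) \<and> (\<forall>v. (\<forall>t. cis_comb x y t \<le> v) \<longrightarrow> u \<le> v)"
  have "?P L" using upper least by blast
  moreover have "u = L" if "?P u" for u using that \<open>?P L\<close> by (meson order_antisym)
  ultimately have "?P (THE u. ?P u)" by (rule theI)
  then show ?thesis unfolding cabs_def cis_comb_def by simp
qed

lemma cis_comb_le_cabs: "cis_comb x y t \<le> cabs (x, y)"
  using cabs_is_sup by blast

lemma cabs_least: "(\<And>t. cis_comb x y t \<le> v) \<Longrightarrow> cabs (x, y) \<le> v"
  using cabs_is_sup by blast

lemma labs_fst_le_cabs: "labs x \<le> cabs (x, y)"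
  and labs_snd_le_cabs: "labs y \<le> cabs (x, y)"
  using cis_comb_le_cabs[of x y 0] cis_comb_le_cabs[of x y pi]
    cis_comb_le_cabs[of x y "pi / 2"] cis_comb_le_cabs[of x y "- (pi / 2)"]
  unfolding labs_le_iff cis_comb_def by simp_all

lemma cabs_real: "cabs (u, 0) = labs u"
proof (rule order_antisym)
  show "cabs (u, 0) \<le> labs u"
  proof (rule cabs_least)
    fix t
    have "cos t *\<^sub>R u \<le> \<bar>cos t\<bar> *\<^sub>R labs u" by (rule scaleR_le_labs)
    also have "\<dots> \<le> 1 *\<^sub>R labs u" by (intro scaleR_right_mono labs_nonneg) simp
    finally show "cis_comb u 0 t \<le> labs u" unfolding cis_comb_def by simp
  qed
qed (rule labs_fst_le_cabs)

section \<open>The complexification\<close>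

lemma atom_in_norm_one_pos_atoms: "is_atom a \<Longrightarrow> (a, 0) \<in> norm_one_pos_atoms"
  unfolding norm_one_pos_atoms_def is_atom_def cnorm_def by (simp add: cabs_real norm_labs)

lemma norm_one_pos_atomsE:
  assumes "w \<in> norm_one_pos_atoms"
  obtains a where "is_atom a" "w = (a, 0)"
proof -
  obtain a b where ab: "w = (a, b)" by (cases w)
  with assms have "b = 0" unfolding norm_one_pos_atoms_def by simp
  moreover have "is_atom a" using assms unfolding ab \<open>b = 0\<close> norm_one_pos_atoms_def is_atom_def cnorm_def
    by (simp add: cabs_real norm_labs)
  ultimately show ?thesis using that ab by blast
qed

lemma ldisj_if_cabs_ldisj:
  assumes "inf (cabs (x, y)) (labs u) = 0"
  shows "ldisj x u" "ldisj y u"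
  unfolding ldisj_def
  by (rule inf_eq_0_if_le[OF labs_nonneg labs_fst_le_cabs labs_nonneg assms]
      inf_eq_0_if_le[OF labs_nonneg labs_snd_le_cabs labs_nonneg assms])+

lemma disj_compl_atoms_ldisj:
  assumes "(x, y) \<in> disj_compl norm_one_pos_atoms" "is_atom a"
  shows "ldisj x a" "ldisj y a"
proof -
  have "inf (cabs (x, y)) (labs a) = 0"
    using assms atom_in_norm_one_pos_atoms[OF assms(2)] unfolding disj_compl_def
    by (auto simp: cabs_real)
  then show "ldisj x a" "ldisj y a" by (rule ldisj_if_cabs_ldisj)+
qed

lemma real_in_disj_compl_atoms:
  fixes u :: "'a::real_banach_lattice"
  assumes "\<And>a. is_atom a \<Longrightarrow> ldisj u a"
  shows "(u, 0) \<in> disj_compl norm_one_pos_atoms"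
  unfolding disj_compl_def
proof (intro CollectI ballI)
  fix w :: "'a \<times> 'a" assume "w \<in> norm_one_pos_atoms"
  then obtain a where "is_atom a" "w = (a, 0)" by (rule norm_one_pos_atomsE)
  then show "inf (cabs (u, 0)) (cabs w) = 0" using assms unfolding ldisj_def by (simp add: cabs_real)
qed

lemma disj_compl2_atoms_ldisj:
  assumes "(x, y) \<in> disj_compl (disj_compl norm_one_pos_atoms)" "\<And>a. is_atom a \<Longrightarrow> ldisj u a"
  shows "ldisj x u" "ldisj y u"
proof -
  have "inf (cabs (x, y)) (labs u) = 0"
    using assms real_in_disj_compl_atoms[OF assms(2)] unfolding disj_compl_def[of "disj_compl _"]
    by (auto simp: cabs_real)
  then show "ldisj x u" "ldisj y u" by (rule ldisj_if_cabs_ldisj)+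
qed

lemma atom_in_disj_compl2:
  fixes a :: "'a::real_banach_lattice"
  assumes "is_atom a"
  shows "(a, 0) \<in> disj_compl (disj_compl norm_one_pos_atoms)"
  unfolding disj_compl_def[of "disj_compl _"]
proof (intro CollectI ballI)
  fix w :: "'a \<times> 'a" assume "w \<in> disj_compl norm_one_pos_atoms"
  then have "inf (cabs w) (cabs (a, 0)) = 0"
    using atom_in_norm_one_pos_atoms[OF assms] unfolding disj_compl_def by blast
  then show "inf (cabs (a, 0)) (cabs w) = 0" by (simp add: inf.commute)
qed

lemma norm_fst_le_cnorm: "norm x \<le> cnorm (x, y)"
  unfolding cnorm_def by (metis labs_fst_le_cabs labs_nonneg norm_labs norm_mono_nonneg)

lemma norm_snd_le_cnorm: "norm y \<le> cnorm (x, y)"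
  unfolding cnorm_def by (metis labs_snd_le_cabs labs_nonneg norm_labs norm_mono_nonneg)

text \<open>\<open>cplx S1 S2\<close> is the operator \<open>S1 + i S2\<close> acting on \<open>x + i y \<cong> (x, y)\<close>.\<close>

definition cplx :: "('a::real_banach_lattice \<Rightarrow> 'a) \<Rightarrow> ('a \<Rightarrow> 'a) \<Rightarrow> 'a \<times> 'a \<Rightarrow> 'a \<times> 'a" where
  "cplx S1 S2 z = (S1 (fst z) - S2 (snd z), S2 (fst z) + S1 (snd z))"

lemma cplx_in_center: "S1 \<in> real_center \<Longrightarrow> S2 \<in> real_center \<Longrightarrow> cplx S1 S2 \<in> center"
  unfolding center_def cplx_def by auto

lemma centerE:
  assumes "T \<in> center"
  obtains S1 S2 where "S1 \<in> real_center" "S2 \<in> real_center" "T = cplx S1 S2"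
  using assms unfolding center_def cplx_def by fastforce

lemma compact_on_cplx:
  assumes "compact (closure (R1 ` {x. norm x \<le> 1}))" "compact (closure (R2 ` {x. norm x \<le> 1}))"
  shows "compact_on (cplx R1 R2) UNIV"
proof -
  define K1 where "K1 = closure (R1 ` {x. norm x \<le> 1})"
  define K2 where "K2 = closure (R2 ` {x. norm x \<le> 1})"
  let ?P = "{p - q | p q. p \<in> K1 \<and> q \<in> K2} \<times> {p + q | p q. p \<in> K2 \<and> q \<in> K1}"
  have "compact ?P"
    using assms unfolding K1_def[symmetric] K2_def[symmetric]
    by (intro compact_Times compact_differences compact_sums)
  have "cplx R1 R2 z \<in> ?P" if "z \<in> {z \<in> UNIV. cnorm z \<le> 1}" for z
  proof -
    obtain x y where z: "z = (x, y)" by (cases z)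
    then have "norm x \<le> 1" "norm y \<le> 1" using that norm_fst_le_cnorm[of x y] norm_snd_le_cnorm[of y x] by auto
    then have "R1 x \<in> K1" "R2 x \<in> K2" "R1 y \<in> K1" "R2 y \<in> K2"
      unfolding K1_def K2_def by (auto intro: closure_subset[THEN subsetD])
    then have "R1 x - R2 y \<in> {p - q | p q. p \<in> K1 \<and> q \<in> K2}"
      and "R2 x + R1 y \<in> {p + q | p q. p \<in> K2 \<and> q \<in> K1}" by blast+
    then show ?thesis unfolding z cplx_def by simp
  qed
  then have "cplx R1 R2 ` {z \<in> UNIV. cnorm z \<le> 1} \<subseteq> ?P" by (rule image_subsetI)
  then have "closure (cplx R1 R2 ` {z \<in> UNIV. cnorm z \<le> 1}) \<subseteq> ?P"
    using compact_imp_closed[OF \<open>compact ?P\<close>] by (rule closure_minimal)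
  then have "?P \<inter> closure (cplx R1 R2 ` {z \<in> UNIV. cnorm z \<le> 1})
      = closure (cplx R1 R2 ` {z \<in> UNIV. cnorm z \<le> 1})" by (rule Int_absorb1)
  moreover have "compact (?P \<inter> closure (cplx R1 R2 ` {z \<in> UNIV. cnorm z \<le> 1}))"
    by (rule compact_Int_closed[OF \<open>compact ?P\<close> closed_closure])
  ultimately show ?thesis unfolding compact_on_def by (simp only:)
qed

lemma finite_if_uniform_discrete_in_compact:
  fixes S :: "'a::metric_space set"
  assumes "compact K" "S \<subseteq> K" "uniform_discrete S"
  shows "finite S"
proof -
  have "compact S"
    using compact_Int_closed[OF assms(1) uniform_discrete_imp_closed[OF assms(3)]] assms(2)
    by (simp add: inf.absorb2)
  then show ?thesis using uniform_discrete_imp_discrete[OF assms(3)] discrete_compact_finite_iff by blast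
qed

lemma abs_le_norm_diff_atoms:
  assumes a: "is_atom a" and b: "is_atom b" and "a \<noteq> b"
  shows "\<bar>s\<bar> \<le> norm (s *\<^sub>R a - t *\<^sub>R b)"
proof -
  have "atom_coeff a (s *\<^sub>R a - t *\<^sub>R b) = s"
    using assms by (simp add: atom_coeff_diff atom_coeff_scaleR atom_coeff_self atom_coeff_other_atom)
  then show ?thesis using abs_atom_coeff_le_norm[OF a, of "s *\<^sub>R a - t *\<^sub>R b"] by simp
qed

text \<open>Distinct atoms of \<open>large_atoms S n\<close> are sent by \<open>g\<close> to points at distance at least \<open>1 / (n + 1)\<close>;
  inside a compact set there can only be finitely many of them.\<close>

lemma finite_large_atoms_if_compact:
  assumes S: "central_bound S c" and K: "compact K" and gK: "\<And>a. is_atom a \<Longrightarrow> g a \<in> K"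
    and g: "\<And>a b. is_atom a \<Longrightarrow> is_atom b \<Longrightarrow>
      norm (atom_eigenvalue S a *\<^sub>R a - atom_eigenvalue S b *\<^sub>R b) \<le> dist (g a) (g b)"
  shows "finite (large_atoms S n)"
proof -
  let ?e = "inverse (real (Suc n))"
  have sep: "?e \<le> dist (g a) (g b)" if "a \<in> large_atoms S n" "b \<in> large_atoms S n" "a \<noteq> b" for a b
  proof -
    have "?e \<le> \<bar>atom_eigenvalue S a\<bar>" using that(1) unfolding large_atoms_def by simp
    also have "\<dots> \<le> norm (atom_eigenvalue S a *\<^sub>R a - atom_eigenvalue S b *\<^sub>R b)"
      using that by (intro abs_le_norm_diff_atoms) (auto dest: large_atoms_atom)
    also have "\<dots> \<le> dist (g a) (g b)" using that by (intro g) (auto dest: large_atoms_atom)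
    finally show ?thesis .
  qed
  then have "inj_on g (large_atoms S n)" by (intro inj_onI) (metis dist_self inverse_positive_iff_positive
      of_nat_0_less_iff zero_less_Suc not_le)
  moreover have "uniform_discrete (g ` large_atoms S n)"
    unfolding uniform_discrete_def using sep by (intro exI[of _ ?e]) (auto simp: not_le[symmetric])
  then have "finite (g ` large_atoms S n)"
    using gK large_atoms_atom by (intro finite_if_uniform_discrete_in_compact[OF K]) blast+
  ultimately show ?thesis by (rule finite_imageD[rotated])
qed

lemma cplx_diff: "cplx (\<lambda>x. A1 x - B1 x) (\<lambda>x. A2 x - B2 x) z = cplx A1 A2 z - cplx B1 B2 z"
  unfolding cplx_def by (simp add: algebra_simps)

lemma finite_large_atoms_if_compact_on_atomic_band:
  fixes S1 S2 :: "'a::real_banach_lattice \<Rightarrow> 'a"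
  assumes c1: "central_bound S1 c1" and c2: "central_bound S2 c2"
    and compact: "compact_on (cplx S1 S2) (disj_compl (disj_compl norm_one_pos_atoms))"
  shows "finite (large_atoms S1 n)" "finite (large_atoms S2 n)"
proof -
  let ?K = "closure (cplx S1 S2 ` {z \<in> disj_compl (disj_compl norm_one_pos_atoms). cnorm z \<le> 1})"
  have K: "compact ?K" using compact unfolding compact_on_def .
  have inK: "cplx S1 S2 (a, 0) \<in> ?K" if "is_atom a" for a
  proof -
    have "cnorm (a, 0) \<le> 1" unfolding cnorm_def using atom_norm[OF that] by (simp add: cabs_real norm_labs)
    then show ?thesis using atom_in_disj_compl2[OF that] by (blast intro: closure_subset[THEN subsetD])
  qed
  have T_atom: "cplx S1 S2 (a, 0) = (atom_eigenvalue S1 a *\<^sub>R a, atom_eigenvalue S2 a *\<^sub>R a)"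
    if "is_atom a" for a
    using linear_0[OF central_boundD(1)[OF c1]] linear_0[OF central_boundD(1)[OF c2]]
      central_atom_eigenvalue[OF c1 that] central_atom_eigenvalue[OF c2 that]
    unfolding cplx_def by simp
  show "finite (large_atoms S1 n)"
  proof (rule finite_large_atoms_if_compact[OF c1 K inK])
    fix a b :: 'a assume "is_atom a" "is_atom b"
    then show "norm (atom_eigenvalue S1 a *\<^sub>R a - atom_eigenvalue S1 b *\<^sub>R b)
        \<le> dist (cplx S1 S2 (a, 0)) (cplx S1 S2 (b, 0))"
      using norm_fst_le[of "atom_eigenvalue S1 a *\<^sub>R a - atom_eigenvalue S1 b *\<^sub>R b"
          "atom_eigenvalue S2 a *\<^sub>R a - atom_eigenvalue S2 b *\<^sub>R b"]
      by (simp add: T_atom dist_norm)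
  qed
  show "finite (large_atoms S2 n)"
  proof (rule finite_large_atoms_if_compact[OF c2 K inK])
    fix a b :: 'a assume "is_atom a" "is_atom b"
    then show "norm (atom_eigenvalue S2 a *\<^sub>R a - atom_eigenvalue S2 b *\<^sub>R b)
        \<le> dist (cplx S1 S2 (a, 0)) (cplx S1 S2 (b, 0))"
      using norm_snd_le[of "atom_eigenvalue S2 a *\<^sub>R a - atom_eigenvalue S2 b *\<^sub>R b"
          "atom_eigenvalue S1 a *\<^sub>R a - atom_eigenvalue S1 b *\<^sub>R b"]
      by (simp add: T_atom dist_norm)
  qed
qed

lemma cplx_atomic_part_eq_on_disj_compl2:
  assumes "central_finite_large_atoms S1 c1" "central_finite_large_atoms S2 c2"
    and "z \<in> disj_compl (disj_compl norm_one_pos_atoms)"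
  shows "cplx (atomic_part S1) (atomic_part S2) z = cplx S1 S2 z"
proof -
  obtain x y where z: "z = (x, y)" by (cases z)
  have "ldisj x u" "ldisj y u" if "\<And>a. is_atom a \<Longrightarrow> ldisj u a" for u
    using disj_compl2_atoms_ldisj[OF assms(3)[unfolded z] that] by blast+
  then show ?thesis
    unfolding z cplx_def
    using central_finite_large_atoms.atomic_part_eq_on_atomic_band[OF assms(1)]
      central_finite_large_atoms.atomic_part_eq_on_atomic_band[OF assms(2)]
    by simp
qed

lemma cplx_atomic_part_eq_0_on_disj_compl:
  assumes "central_finite_large_atoms S1 c1" "central_finite_large_atoms S2 c2"
    and "z \<in> disj_compl norm_one_pos_atoms"
  shows "cplx (atomic_part S1) (atomic_part S2) z = 0"
proof -
  obtain x y where z: "z = (x, y)" by (cases z)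
  have "\<And>a. is_atom a \<Longrightarrow> ldisj x a" "\<And>a. is_atom a \<Longrightarrow> ldisj y a"
    using disj_compl_atoms_ldisj[OF assms(3)[unfolded z]] by blast+
  then show ?thesis
    unfolding z cplx_def
    using central_finite_large_atoms.atomic_part_eq_0[OF assms(1)]
      central_finite_large_atoms.atomic_part_eq_0[OF assms(2)]
    by (simp add: zero_prod_def)
qed

theorem mainTheorem9:
  fixes T :: "'a::real_banach_lattice \<times> 'a \<Rightarrow> 'a \<times> 'a"
  assumes "T \<in> center"
    and "compact_on T (disj_compl (disj_compl norm_one_pos_atoms))"
  shows "\<exists>T1 T2. T1 \<in> center \<and> T2 \<in> center \<and> compact_on T1 UNIV \<and>
           (\<forall>z. T z = T1 z + T2 z) \<and>
           (\<forall>z \<in> disj_compl (disj_compl norm_one_pos_atoms). T1 z = T z) \<and>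
           (\<forall>z \<in> disj_compl norm_one_pos_atoms. T2 z = T z)"
proof -
  obtain S1 S2 where "S1 \<in> real_center" "S2 \<in> real_center" and T: "T = cplx S1 S2"
    using assms(1) by (rule centerE)
  obtain c1 c2 where c1: "central_bound S1 c1" and c2: "central_bound S2 c2"
    using real_center_imp_central_bound[OF \<open>S1 \<in> real_center\<close>]
      real_center_imp_central_bound[OF \<open>S2 \<in> real_center\<close>] by metis
  note finite = finite_large_atoms_if_compact_on_atomic_band[OF c1 c2 assms(2)[unfolded T]]
  interpret A1: central_finite_large_atoms S1 c1 using c1 finite(1) by unfold_locales
  interpret A2: central_finite_large_atoms S2 c2 using c2 finite(2) by unfold_locales
  let ?T1 = "cplx (atomic_part S1) (atomic_part S2)"
  let ?T2 = "cplx (\<lambda>x. S1 x - atomic_part S1 x) (\<lambda>x. S2 x - atomic_part S2 x)"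
  show ?thesis
  proof (intro exI conjI ballI allI)
    show "?T1 \<in> center"
      using A1.central_bound_atomic_part A2.central_bound_atomic_part
      by (intro cplx_in_center central_bound_imp_real_center)
    show "?T2 \<in> center"
      using central_bound_diff[OF c1 A1.central_bound_atomic_part]
        central_bound_diff[OF c2 A2.central_bound_atomic_part]
      by (intro cplx_in_center central_bound_imp_real_center)
    show "compact_on ?T1 UNIV"
      using A1.compact_closure_atomic_part_ball A2.compact_closure_atomic_part_ball
      by (rule compact_on_cplx)
    show "T z = ?T1 z + ?T2 z" for z unfolding T cplx_diff by simp
    show "?T1 z = T z" if "z \<in> disj_compl (disj_compl norm_one_pos_atoms)" for z
      unfolding T using A1.central_finite_large_atoms_axioms A2.central_finite_large_atoms_axioms that
      by (rule cplx_atomic_part_eq_on_disj_compl2)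
    show "?T2 z = T z" if "z \<in> disj_compl norm_one_pos_atoms" for z
      unfolding T cplx_diff
      using cplx_atomic_part_eq_0_on_disj_compl[OF A1.central_finite_large_atoms_axioms
          A2.central_finite_large_atoms_axioms that]
      by simp
  qed
qed

end
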